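(* Let $q_0=p^m$ be an odd prime power, $q=q_0^2$, $s=q_0\frac{q_0^2+1}{2}$ and $g=\frac{(q_0-1)^2}{4}$. Then for every integer $r$ with $\frac{g-3}{2}<r<\frac{s-g-2}{2}$ there exists a $1$-dim hull code over $\mathbb{F}_q$ with parameters $[s-1,2r+2,\ge s-2r-g-2]$ whose dual has parameters $[s-1,s-2r-3,\ge2r-g+3]$.
   Context: $[n,k,\ge d]$ denotes a linear code of length $n$, dimension $k$ and minimum distance at least $d$. The hull of a linear code $C$ is $C\cap C^\perp$ (Euclidean dual), and $C$ is a $1$-dim hull code if $\dim(C\cap C^\perp)=1$. *)

theory Defs
  imports Complex_Main "HOL-Library.Function_Algebras" "HOL-Computational_Algebra.Primes"
begin

text \<open>Vectors of length n over a field 'a are modelled as functions nat => 'a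
  vanishing outside {0..<n}.\<close>

definition vecs :: "nat \<Rightarrow> (nat \<Rightarrow> 'a::field) set" where
  "vecs n = {v. \<forall>i\<ge>n. v i = 0}"

definition sc :: "'a::field \<Rightarrow> (nat \<Rightarrow> 'a) \<Rightarrow> (nat \<Rightarrow> 'a)" where
  "sc c v = (\<lambda>i. c * v i)"

lemma vector_space_sc: "vector_space (sc :: 'a::field \<Rightarrow> _)"
  by unfold_locales (auto simp: sc_def fun_eq_iff algebra_simps)

definition vdim :: "(nat \<Rightarrow> 'a::field) set \<Rightarrow> nat" where
  "vdim C = vector_space.dim (sc :: 'a \<Rightarrow> _) C"

definition linear_code :: "nat \<Rightarrow> (nat \<Rightarrow> 'a::field) set \<Rightarrow> bool" where
  "linear_code n C \<longleftrightarrow> C \<subseteq> vecs n \<and> (\<lambda>i. 0) \<in> C \<and>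
     (\<forall>x\<in>C. \<forall>y\<in>C. (\<lambda>i. x i + y i) \<in> C) \<and> (\<forall>c. \<forall>x\<in>C. sc c x \<in> C)"

definition hamming_dist :: "nat \<Rightarrow> (nat \<Rightarrow> 'a) \<Rightarrow> (nat \<Rightarrow> 'a) \<Rightarrow> nat" where
  "hamming_dist n x y = card {i. i < n \<and> x i \<noteq> y i}"

definition code_params :: "nat \<Rightarrow> nat \<Rightarrow> int \<Rightarrow> (nat \<Rightarrow> 'a::field) set \<Rightarrow> bool" where
  "code_params n k d C \<longleftrightarrow> linear_code n C \<and> vdim C = k \<and>
     (\<forall>x\<in>C. \<forall>y\<in>C. x \<noteq> y \<longrightarrow> int (hamming_dist n x y) \<ge> d)"

definition dual_code :: "nat \<Rightarrow> (nat \<Rightarrow> 'a::field) set \<Rightarrow> (nat \<Rightarrow> 'a) set" where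
  "dual_code n C = {v \<in> vecs n. \<forall>c\<in>C. (\<Sum>i<n. v i * c i) = 0}"

definition code_hull :: "nat \<Rightarrow> (nat \<Rightarrow> 'a::field) set \<Rightarrow> (nat \<Rightarrow> 'a) set" where
  "code_hull n C = C \<inter> dual_code n C"

end

theory Submission
  imports Defs "HOL-Computational_Algebra.Polynomial" "HOL-Library.FuncSet"
begin

(* The codes are one-point algebraic geometry codes on the curve y^\<alpha> = x^q0 + x over F_q,
   where \<alpha> = (q0 + 1) / 2: a quotient of the Hermitian curve, of genus g = (\<alpha> - 1)^2,
   with s = q0 + (q - q0) \<alpha> affine rational points.  The functions with a pole of order at
   most m at infinity are spanned by the monomials x^i y^j with j < \<alpha> and \<alpha> i + q0 j \<le> m,
   and there are m + 1 - g of them once m \<ge> 2g - 1; a nonzero such function has at most m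
   zeros.  Evaluating at the s - 1 affine points other than the origin therefore gives
   [s - 1, m + 1 - g, \<ge> s - 1 - m] codes.  Since 2\<alpha> = 1 in F_q, summing a monomial x^i y^j
   over the affine points with weight 1 where y = 0 and 2 elsewhere gives 0 whenever
   \<alpha> i + q0 j < \<alpha> (q - 1); hence the dual of the code of degree m is the weighted code of
   degree m' = s + 2g - 2 - m restricted to functions vanishing at the origin.  As 2 is a
   square in F_q, rescaling the coordinates by square roots of the weights puts the
   evaluation vector of x into both the code and its dual, so the hull is nonzero.  Finally, rescaling one
   coordinate by some t with t^2 \<noteq> 1 preserves all parameters and lowers the dimension of
   a nonzero hull by exactly one. *)

lemma card_roots_power_eq:
  fixes c :: "'a::field"
  assumes "d \<ge> 1"
  shows "card {x. x ^ d = c} \<le> d"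
proof -
  let ?P = "monom 1 d + [:-c:]"
  have deg: "degree ?P = d" using assms by (subst degree_add_eq_left) (auto simp: degree_monom_eq)
  have "?P \<noteq> 0" using assms deg by auto
  then have "card {x. poly ?P x = 0} \<le> degree ?P" by (rule card_poly_roots_bound)
  moreover have "{x. poly ?P x = 0} = {x. x ^ d = c}" by (auto simp: poly_monom)
  ultimately show ?thesis using deg by simp
qed

lemma card_roots_trinomial:
  fixes a c :: "'a::field"
  assumes "d \<ge> 2"
  shows "card {x. x ^ d + a * x + c = 0} \<le> d"
proof -
  let ?P = "monom 1 d + [:c, a:]"
  have deg: "degree ?P = d" using assms by (subst degree_add_eq_left) (auto simp: degree_monom_eq)
  have "?P \<noteq> 0" using assms deg by auto
  then have "card {x. poly ?P x = 0} \<le> degree ?P" by (rule card_poly_roots_bound)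
  moreover have "{x. poly ?P x = 0} = {x. x ^ d + a * x + c = 0}" by (auto simp: poly_monom algebra_simps)
  ultimately show ?thesis using deg by simp
qed

lemma card_eq_sum_card_fibres:
  assumes "finite A" "finite B" "f ` A \<subseteq> B"
  shows "card A = (\<Sum>b\<in>B. card {a\<in>A. f a = b})"
  using sum.group[OF assms, of "\<lambda>_. 1::nat"] by simp

lemma card_fibre_eq_if_card_le:
  assumes fA: "finite A" and fB: "finite B" and img: "f ` A \<subseteq> B" and cB: "card B \<le> b"
    and fib: "\<And>y. y \<in> B \<Longrightarrow> card {x\<in>A. f x = y} \<le> a"
    and cA: "card A = a * b" and y: "y \<in> B"
  shows "card {x\<in>A. f x = y} = a"
proof -
  have "(\<Sum>y\<in>B. (a - card {x\<in>A. f x = y})) + (\<Sum>y\<in>B. card {x\<in>A. f x = y}) = (\<Sum>y\<in>B. a)"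
    by (subst sum.distrib[symmetric]) (intro sum.cong; use fib in auto)
  moreover have "(\<Sum>y\<in>B. a) \<le> a * b" using cB by (simp add: mult.commute)
  ultimately have "(\<Sum>y\<in>B. (a - card {x\<in>A. f x = y})) = 0"
    using card_eq_sum_card_fibres[OF fA fB img] cA by linarith
  then have "a - card {x\<in>A. f x = y} = 0" using y fB by (simp add: sum_eq_0_iff)
  then show ?thesis using fib[OF y] by simp
qed

lemma sum_sum_single:
  assumes "finite A" "finite B" "a0 \<in> A" "b0 \<in> B"
    and "\<And>a b. a \<in> A \<Longrightarrow> b \<in> B \<Longrightarrow> (a, b) \<noteq> (a0, b0) \<Longrightarrow> F a b = (0::'b::comm_monoid_add)"
  shows "(\<Sum>a\<in>A. \<Sum>b\<in>B. F a b) = F a0 b0"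
proof -
  have "(\<Sum>a\<in>A. \<Sum>b\<in>B. F a b) = (\<Sum>(a, b)\<in>A \<times> B. F a b)"
    by (rule sum.cartesian_product)
  also have "\<dots> = (\<Sum>(a, b)\<in>{(a0, b0)}. F a b)"
    using assms by (intro sum.mono_neutral_right) auto
  finally show ?thesis by simp
qed

lemma double_sum_lessThan_int: "2 * (\<Sum>j<n. int j) = int n * (int n - 1)"
  by (induction n) (simp_all add: algebra_simps)

lemma poly_eq_sum_atMost:
  fixes p :: "'a::field poly"
  assumes "degree p \<le> N"
  shows "poly p x = (\<Sum>i\<le>N. coeff p i * x ^ i)"
proof -
  have "poly p x = (\<Sum>i\<le>degree p. coeff p i * x ^ i)" by (rule poly_altdef)
  also have "\<dots> = (\<Sum>i\<le>N. coeff p i * x ^ i)"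
    using assms by (intro sum.mono_neutral_left) (auto simp: coeff_eq_0)
  finally show ?thesis .
qed

section \<open>Finite fields\<close>

lemma of_nat_card_UNIV: "(of_nat (card (UNIV :: 'a::{ring_1,finite} set)) :: 'a) = 0"
proof -
  have "(\<Sum>y\<in>(UNIV::'a set). y + 1) = (\<Sum>y\<in>UNIV. y)"
    by (rule sum.reindex_bij_witness[of _ "\<lambda>y. y - 1" "\<lambda>y. y + 1"]) auto
  then show ?thesis by (simp add: sum.distrib)
qed

lemma card_UNIV_gt_1: "card (UNIV :: 'a::{zero_neq_one,finite} set) > 1"
proof -
  have "card {0::'a, 1} \<le> card (UNIV :: 'a set)" by (intro card_mono) auto
  then show ?thesis by simp
qed

lemma power_card_minus_1:
  fixes x :: "'a::{field,finite}"
  assumes x: "x \<noteq> 0"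
  shows "x ^ (card (UNIV :: 'a set) - 1) = 1"
proof -
  let ?S = "UNIV - {0::'a}"
  have "(\<Prod>y\<in>?S. x * y) = (\<Prod>y\<in>?S. y)"
    by (rule prod.reindex_bij_witness[of _ "\<lambda>y. y / x" "\<lambda>y. x * y"]) (use x in auto)
  then have "x ^ card ?S * (\<Prod>y\<in>?S. y) = (\<Prod>y\<in>?S. y)" by (simp add: prod.distrib)
  moreover have "(\<Prod>y\<in>?S. y) \<noteq> 0" by simp
  ultimately show ?thesis by (simp add: card_Diff_singleton)
qed

lemma power_card: "(x::'a::{field,finite}) ^ card (UNIV :: 'a set) = x"
proof (cases "x = 0")
  case False
  have "card (UNIV :: 'a set) = Suc (card (UNIV :: 'a set) - 1)" using card_UNIV_gt_1[where 'a='a] by simp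
  then have "x ^ card (UNIV :: 'a set) = x ^ (card (UNIV :: 'a set) - 1) * x" by (metis power_Suc2)
  then show ?thesis using power_card_minus_1[OF False] by simp
qed (use card_UNIV_gt_1[where 'a='a] in simp)

text \<open>The roots of x^I = 1 are too few to fill the unit group, so some unit a has a^I \<noteq> 1,
  and the substitution x \<mapsto> a x multiplies the sum by a^I.\<close>

lemma sum_UNIV_power:
  assumes I: "I < card (UNIV :: 'a::{field,finite} set) - 1"
  shows "(\<Sum>x::'a\<in>UNIV. x ^ I) = 0"
proof (cases "I = 0")
  case True
  then show ?thesis using of_nat_card_UNIV[where 'a='a] by simp
next
  case False
  have "\<exists>a::'a. a \<noteq> 0 \<and> a ^ I \<noteq> 1"
  proof (rule ccontr)
    assume "\<not> (\<exists>a::'a. a \<noteq> 0 \<and> a ^ I \<noteq> 1)"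
    then have "card (UNIV - {0::'a}) \<le> card {z::'a. z ^ I = 1}" by (intro card_mono) auto
    also have "\<dots> \<le> I" by (rule card_roots_power_eq) (use False in simp)
    finally show False using I by (simp add: card_Diff_singleton)
  qed
  then obtain a :: 'a where a: "a \<noteq> 0" "a ^ I \<noteq> 1" by blast
  have "(\<Sum>x\<in>(UNIV::'a set). (a * x) ^ I) = (\<Sum>x\<in>UNIV. x ^ I)"
    by (rule sum.reindex_bij_witness[of _ "\<lambda>y. y / a" "\<lambda>y. a * y"]) (use a in auto)
  then have "a ^ I * (\<Sum>x\<in>(UNIV::'a set). x ^ I) = (\<Sum>x\<in>UNIV. x ^ I)"
    by (simp add: power_mult_distrib sum_distrib_left)
  then have "(a ^ I - 1) * (\<Sum>x\<in>(UNIV::'a set). x ^ I) = 0" by (simp add: algebra_simps)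
  then show ?thesis using a by simp
qed

lemma exists_poly_indicator:
  fixes x0 :: "'a::{field,finite}"
  shows "\<exists>A. degree A \<le> card (UNIV :: 'a set) - 1 \<and> (\<forall>x. poly A x = (if x = x0 then 1 else 0))"
proof (intro exI conjI allI)
  let ?A = "1 - [:-x0, 1:] ^ (card (UNIV :: 'a set) - 1)"
  have "degree ([:-x0, 1:] ^ (card (UNIV :: 'a set) - 1)) \<le> card (UNIV :: 'a set) - 1"
    using degree_power_le[of "[:-x0, 1:]" "card (UNIV :: 'a set) - 1"] by simp
  then show "degree ?A \<le> card (UNIV :: 'a set) - 1"
    using degree_diff_le_max[of 1 "[:-x0, 1:] ^ (card (UNIV :: 'a set) - 1)"] by simp
  fix x
  show "poly ?A x = (if x = x0 then 1 else 0)"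
  proof (cases "x = x0")
    case True
    then show ?thesis using card_UNIV_gt_1[where 'a='a] by (simp add: zero_power)
  next
    case False
    then show ?thesis using power_card_minus_1[of "x - x0"] by simp
  qed
qed

lemma exists_poly_vanishing_except:
  fixes y0 :: "'a::field"
  assumes "finite Y" "y0 \<in> Y"
  shows "\<exists>B. degree B \<le> card Y - 1 \<and> poly B y0 = 1 \<and> (\<forall>y\<in>Y - {y0}. poly B y = 0)"
proof (intro exI conjI ballI)
  let ?Y' = "Y - {y0}"
  define c where "c = (\<Prod>y1\<in>?Y'. y0 - y1)"
  have c0: "c \<noteq> 0" unfolding c_def using assms(1) by (simp add: prod_zero_iff)
  let ?B = "smult (inverse c) (\<Prod>y1\<in>?Y'. [:-y1, 1:])"
  have "degree (\<Prod>y1\<in>?Y'. [:-y1, 1:]) \<le> (\<Sum>y1\<in>?Y'. degree [:-y1, 1:])"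
    using degree_prod_sum_le[of ?Y' "\<lambda>y1. [:-y1, 1:]"] assms(1) by (simp add: o_def)
  also have "\<dots> = card Y - 1" using assms by (simp add: card_Diff_singleton)
  finally show "degree ?B \<le> card Y - 1" by simp
  show "poly ?B y0 = 1" using c0 by (simp add: poly_prod c_def)
  show "poly ?B y = 0" if "y \<in> ?Y'" for y
    using that assms(1) by (simp add: poly_prod prod_zero_iff)
qed

definition supported_in :: "'k set \<Rightarrow> ('k \<Rightarrow> 'b::zero) set" where
  "supported_in M = {c. \<forall>z. z \<notin> M \<longrightarrow> c z = 0}"

lemma supported_in_mono: "M \<subseteq> M' \<Longrightarrow> supported_in M \<subseteq> supported_in M'"
  by (auto simp: supported_in_def)

lemma supported_in_sum:
  "finite I \<Longrightarrow> (\<And>i. i \<in> I \<Longrightarrow> h i \<in> supported_in M) \<Longrightarrow> (\<lambda>w. \<Sum>i\<in>I. h i w) \<in> supported_in M"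
  by (auto simp: supported_in_def intro!: sum.neutral)

lemma card_supported_in:
  assumes "finite M"
  shows "card (supported_in M :: ('k \<Rightarrow> 'b::{zero,finite}) set) = card (UNIV :: 'b set) ^ card M"
proof -
  have "bij_betw (\<lambda>c. restrict c M) (supported_in M :: ('k \<Rightarrow> 'b) set) (M \<rightarrow>\<^sub>E (UNIV :: 'b set))"
  proof (rule bij_betw_byWitness[where f' = "\<lambda>c z. if z \<in> M then c z else 0"])
    show "\<forall>a\<in>supported_in M. (\<lambda>z. if z \<in> M then restrict a M z else 0) = a"
      by (auto simp: supported_in_def fun_eq_iff)
    show "\<forall>a'\<in>M \<rightarrow>\<^sub>E UNIV. restrict (\<lambda>z. if z \<in> M then a' z else 0) M = a'"
      by (auto simp: fun_eq_iff PiE_def extensional_def)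
    show "(\<lambda>c. restrict c M) ` supported_in M \<subseteq> M \<rightarrow>\<^sub>E UNIV" by auto
    show "(\<lambda>c z. if z \<in> M then c z else 0) ` (M \<rightarrow>\<^sub>E UNIV) \<subseteq> supported_in M"
      by (auto simp: supported_in_def)
  qed
  then have "card (supported_in M :: ('k \<Rightarrow> 'b) set) = card (M \<rightarrow>\<^sub>E (UNIV :: 'b set))"
    by (rule bij_betw_same_card)
  also have "\<dots> = card (UNIV :: 'b set) ^ card M" using assms by (rule card_funcsetE)
  finally show ?thesis .
qed

lemma finite_supported_in: "finite M \<Longrightarrow> finite (supported_in M :: ('k \<Rightarrow> 'b::{zero,finite}) set)"
  using card_supported_in[of M, where 'b='b] card_gt_0_iff[of "supported_in M"]
  by (metis finite_UNIV_card_ge_0 finite_class.finite_UNIV zero_less_power)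

section \<open>Linear codes\<close>

lemma vecs_eq_supported_in: "vecs n = supported_in {..<n}"
  by (auto simp: vecs_def supported_in_def)

lemma finite_linear_code:
  "linear_code n (C :: (nat \<Rightarrow> 'a::{field,finite}) set) \<Longrightarrow> finite C"
  using finite_supported_in[of "{..<n}", where 'b='a]
  by (auto simp: linear_code_def vecs_eq_supported_in intro: finite_subset)

lemma linear_code_subspace:
  assumes "linear_code n C"
  shows "module.subspace (sc :: 'a::field \<Rightarrow> _) C"
proof -
  interpret V: vector_space "sc :: 'a \<Rightarrow> (nat \<Rightarrow> 'a) \<Rightarrow> (nat \<Rightarrow> 'a)" by (rule vector_space_sc)
  show ?thesis using assms unfolding V.subspace_def linear_code_def
    by (simp add: zero_fun_def plus_fun_def)
qed

text \<open>A basis B identifies C with the coefficient functions B \<rightarrow> F.\<close>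

lemma card_linear_code:
  fixes C :: "(nat \<Rightarrow> 'a::{field,finite}) set"
  assumes lc: "linear_code n C"
  shows "card C = card (UNIV::'a set) ^ vdim C"
proof -
  interpret V: vector_space "sc :: 'a \<Rightarrow> (nat \<Rightarrow> 'a) \<Rightarrow> (nat \<Rightarrow> 'a)" by (rule vector_space_sc)
  have sub: "V.subspace C" by (rule linear_code_subspace[OF lc])
  have finC: "finite C" by (rule finite_linear_code[OF lc])
  obtain B where B: "B \<subseteq> C" "V.independent B" "C \<subseteq> V.span B" "card B = V.dim C"
    by (rule V.basis_exists)
  have finB: "finite B" using B(1) finC finite_subset by blast
  have spanB: "V.span B = C" using B(1,3) sub by (rule V.span_subspace)
  define \<phi> where "\<phi> = (\<lambda>u. \<Sum>v\<in>B. sc (u v) v)"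
  have img: "\<phi> ` (B \<rightarrow>\<^sub>E UNIV) = C"
  proof
    show "\<phi> ` (B \<rightarrow>\<^sub>E UNIV) \<subseteq> C" unfolding spanB[symmetric] V.span_finite[OF finB] \<phi>_def by auto
    show "C \<subseteq> \<phi> ` (B \<rightarrow>\<^sub>E UNIV)"
    proof
      fix c assume "c \<in> C"
      then have "c \<in> range (\<lambda>u. \<Sum>v\<in>B. sc (u v) v)" unfolding spanB[symmetric] V.span_finite[OF finB] .
      then obtain u where u: "c = (\<Sum>v\<in>B. sc (u v) v)" by auto
      have "c = \<phi> (restrict u B)" unfolding u \<phi>_def by (intro sum.cong) auto
      moreover have "restrict u B \<in> B \<rightarrow>\<^sub>E UNIV" by simp
      ultimately show "c \<in> \<phi> ` (B \<rightarrow>\<^sub>E UNIV)" by blast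
    qed
  qed
  have inj: "inj_on \<phi> (B \<rightarrow>\<^sub>E UNIV)"
  proof (rule inj_onI)
    fix u u' assume u: "u \<in> B \<rightarrow>\<^sub>E UNIV" and u': "u' \<in> B \<rightarrow>\<^sub>E UNIV" and e: "\<phi> u = \<phi> u'"
    have "(\<Sum>v\<in>B. sc (u v - u' v) v) = (\<Sum>v\<in>B. sc (u v) v - sc (u' v) v)"
      by (intro sum.cong refl) (rule V.scale_left_diff_distrib)
    also have "\<dots> = (\<Sum>v\<in>B. sc (u v) v) - (\<Sum>v\<in>B. sc (u' v) v)"
      by (simp only: sum_subtractf)
    also have "\<dots> = 0" using e unfolding \<phi>_def by (simp only: diff_self)
    finally have z: "(\<Sum>v\<in>B. sc (u v - u' v) v) = 0" .
    have "\<forall>v\<in>B. u v - u' v = 0"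
    proof (rule ccontr)
      assume "\<not> (\<forall>v\<in>B. u v - u' v = 0)"
      then have "(\<exists>v\<in>B. u v - u' v \<noteq> 0) \<and> (\<Sum>v\<in>B. sc (u v - u' v) v) = 0" using z by blast
      then have "\<exists>w. (\<exists>v\<in>B. w v \<noteq> 0) \<and> (\<Sum>v\<in>B. sc (w v) v) = 0" by (rule exI[of _ "\<lambda>v. u v - u' v"])
      then have "V.dependent B" unfolding V.dependent_finite[OF finB] .
      then show False using B(2) by simp
    qed
    then show "u = u'" by (intro PiE_ext[OF u u']) simp
  qed
  have "card C = card (B \<rightarrow>\<^sub>E (UNIV::'a set))" using card_image[OF inj] img by simp
  also have "\<dots> = card (UNIV::'a set) ^ card B" by (rule card_funcsetE[OF finB])
  finally show ?thesis using B(4) by (simp add: vdim_def)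
qed

lemma vdim_eq_if_card:
  fixes C :: "(nat \<Rightarrow> 'a::{field,finite}) set"
  assumes "linear_code n C" "card C = card (UNIV::'a set) ^ k"
  shows "vdim C = k"
  using card_linear_code[OF assms(1)] assms(2) card_UNIV_gt_1[where 'a='a]
  by (simp add: power_inject_exp)

lemma vdim_neq_0_if_nonzero:
  fixes C :: "(nat \<Rightarrow> 'a::{field,finite}) set"
  assumes lc: "linear_code n C" and u: "u \<in> C" "u \<noteq> (\<lambda>i. 0)"
  shows "vdim C \<noteq> 0"
proof
  assume "vdim C = 0"
  then have "card C = 1" using card_linear_code[OF lc] by simp
  moreover have "{\<lambda>i. 0, u} \<subseteq> C" using lc u by (auto simp: linear_code_def)
  then have "card {\<lambda>i. 0, u} \<le> card C" by (rule card_mono[OF finite_linear_code[OF lc]])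
  moreover have "card {\<lambda>i. 0, u} = 2" using u(2) by (simp add: eq_commute)
  ultimately show False by simp
qed

lemma linear_code_diff:
  assumes "linear_code n C" "x \<in> C" "y \<in> C"
  shows "(\<lambda>i. x i - y i) \<in> C"
proof -
  have "sc (-1) y \<in> C" using assms by (auto simp: linear_code_def)
  then have "(\<lambda>i. x i + sc (-1) y i) \<in> C" using assms by (auto simp: linear_code_def)
  then show ?thesis by (simp add: sc_def)
qed

lemma linear_code_dual: "linear_code n (dual_code n C)"
proof -
  have "(\<lambda>i. x i + y i) \<in> dual_code n C" if "x \<in> dual_code n C" "y \<in> dual_code n C" for x y
    using that by (auto simp: dual_code_def vecs_def distrib_right sum.distrib)
  moreover have "sc c x \<in> dual_code n C" if "x \<in> dual_code n C" for c x
    using that by (auto simp: dual_code_def vecs_def sc_def mult.assoc sum_distrib_left[symmetric])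
  ultimately show ?thesis by (auto simp: linear_code_def dual_code_def vecs_def)
qed

lemma linear_code_hull: "linear_code n C \<Longrightarrow> linear_code n (code_hull n C)"
  using linear_code_dual[of n C] by (auto simp: linear_code_def code_hull_def)

lemma inj_on_restrict_lessThan:
  assumes lc: "linear_code n C"
  shows "inj_on (\<lambda>c. restrict c {..<n}) C"
proof (rule inj_onI)
  fix x y assume "x \<in> C" "y \<in> C" and e: "restrict x {..<n} = restrict y {..<n}"
  then have "x \<in> vecs n" "y \<in> vecs n" using lc by (auto simp: linear_code_def)
  show "x = y"
  proof
    fix j show "x j = y j"
      using fun_cong[OF e, of j] \<open>x \<in> vecs n\<close> \<open>y \<in> vecs n\<close> by (cases "j < n") (auto simp: vecs_def)
  qed
qed

text \<open>If restriction to J is injective on C but restriction to J - {i} is not, the difference of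
  two codewords that agree on J - {i}, normalized at i, is a unit vector on J.\<close>

lemma exists_unit_codeword:
  fixes C :: "(nat \<Rightarrow> 'a::field) set"
  assumes lc: "linear_code n C" and inj: "inj_on (\<lambda>c. restrict c J) C"
    and not_inj: "\<not> inj_on (\<lambda>c. restrict c (J - {i})) C"
  shows "\<exists>b\<in>C. b i = 1 \<and> (\<forall>j\<in>J - {i}. b j = 0)"
proof -
  obtain x y where xy: "x \<in> C" "y \<in> C" "x \<noteq> y" "restrict x (J - {i}) = restrict y (J - {i})"
    using not_inj unfolding inj_on_def by blast
  define d where "d = (\<lambda>j. x j - y j)"
  have dC: "d \<in> C" unfolding d_def using linear_code_diff[OF lc xy(1,2)] .
  have d0: "\<forall>j\<in>J - {i}. d j = 0"
  proof
    fix j assume j: "j \<in> J - {i}"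
    then have "restrict x (J - {i}) j = restrict y (J - {i}) j" using xy(4) by simp
    then show "d j = 0" using j by (simp add: d_def)
  qed
  have "restrict x J \<noteq> restrict y J" using inj xy(1-3) by (auto simp: inj_on_def)
  then obtain j where "j \<in> J" "x j \<noteq> y j" by (auto simp: restrict_def fun_eq_iff split: if_splits)
  then have di: "d i \<noteq> 0" using d0 by (cases "j = i") (auto simp: d_def)
  have "sc (inverse (d i)) d \<in> C" using dC lc by (auto simp: linear_code_def)
  then show ?thesis using di d0 by (intro bexI[of _ "sc (inverse (d i)) d"]) (auto simp: sc_def)
qed

text \<open>An information set: a minimal J on which restriction is injective.\<close>

lemma exists_information_set:
  fixes C :: "(nat \<Rightarrow> 'a::{field,finite}) set"
  assumes lc: "linear_code n C" and cC: "card C = card (UNIV::'a set) ^ k"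
  obtains J where "J \<subseteq> {..<n}" "k \<le> card J"
    and "\<And>i. i \<in> J \<Longrightarrow> \<exists>b\<in>C. b i = 1 \<and> (\<forall>j\<in>J - {i}. b j = 0)"
proof -
  let ?P = "\<lambda>J. J \<subseteq> {..<n} \<and> inj_on (\<lambda>c. restrict c J) C"
  obtain J where J: "?P J" and minJ: "\<And>J'. ?P J' \<Longrightarrow> card J \<le> card J'"
    using ex_has_least_nat[of ?P "{..<n}" card] inj_on_restrict_lessThan[OF lc] by blast
  have finJ: "finite J" using J finite_subset by blast
  have "card C \<le> card (J \<rightarrow>\<^sub>E (UNIV::'a set))"
    using J by (intro card_inj_on_le[of "\<lambda>c. restrict c J"]) (auto simp: finJ finite_PiE)
  then have "card (UNIV::'a set) ^ k \<le> card (UNIV::'a set) ^ card J"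
    using cC card_funcsetE[OF finJ, of "UNIV::'a set"] by simp
  then have "k \<le> card J" using card_UNIV_gt_1[where 'a='a] power_le_imp_le_exp by blast
  moreover have "\<exists>b\<in>C. b i = 1 \<and> (\<forall>j\<in>J - {i}. b j = 0)" if i: "i \<in> J" for i
  proof (rule exists_unit_codeword[OF lc])
    show "inj_on (\<lambda>c. restrict c J) C" using J by blast
    show "\<not> inj_on (\<lambda>c. restrict c (J - {i})) C"
    proof
      assume "inj_on (\<lambda>c. restrict c (J - {i})) C"
      then have "card J \<le> card (J - {i})" using minJ J by blast
      then show False using card_Diff1_less[OF finJ i] by simp
    qed
  qed
  ultimately show ?thesis using that J by blast
qed

text \<open>A dual codeword vanishing outside an information set J vanishes on J too, by pairing it
  with the unit codewords; so restriction to the complement of J is injective on the dual.\<close>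

lemma card_dual_code_le:
  fixes C :: "(nat \<Rightarrow> 'a::{field,finite}) set"
  assumes lc: "linear_code n C" and cC: "card C = card (UNIV::'a set) ^ k"
  shows "card (dual_code n C) \<le> card (UNIV::'a set) ^ (n - k)"
proof -
  obtain J where J: "J \<subseteq> {..<n}" "k \<le> card J"
    and unit: "\<And>i. i \<in> J \<Longrightarrow> \<exists>b\<in>C. b i = 1 \<and> (\<forall>j\<in>J - {i}. b j = 0)"
    using exists_information_set[OF lc cC] by blast
  let ?R = "{..<n} - J"
  have inj: "inj_on (\<lambda>v. restrict v ?R) (dual_code n C)"
  proof (rule inj_onI)
    fix v v' assume v: "v \<in> dual_code n C" and v': "v' \<in> dual_code n C"
      and e: "restrict v ?R = restrict v' ?R"
    define d where "d = (\<lambda>j. v j - v' j)"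
    have dD: "d \<in> dual_code n C" unfolding d_def using linear_code_diff[OF linear_code_dual v v'] .
    have dout: "d j = 0" if "j \<notin> J" for j
    proof (cases "j < n")
      case True
      then show ?thesis using that fun_cong[OF e, of j] by (simp add: d_def)
    next
      case False
      then show ?thesis using v v' by (simp add: d_def dual_code_def vecs_def)
    qed
    have "d i = 0" if i: "i \<in> J" for i
    proof -
      obtain b where b: "b \<in> C" "b i = 1" "\<forall>j\<in>J - {i}. b j = 0" using unit[OF i] by blast
      have "(\<Sum>j<n. d j * b j) = (\<Sum>j\<in>{i}. d j * b j)"
      proof (rule sum.mono_neutral_right)
        show "\<forall>j\<in>{..<n} - {i}. d j * b j = 0"
        proof
          fix j assume "j \<in> {..<n} - {i}"
          then show "d j * b j = 0" using b(3) dout by (cases "j \<in> J") auto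
        qed
      qed (use i J(1) in auto)
      moreover have "(\<Sum>j<n. d j * b j) = 0" using dD b(1) by (auto simp: dual_code_def)
      ultimately show ?thesis using b(2) by simp
    qed
    then show "v = v'" using dout by (auto simp: d_def fun_eq_iff)
  qed
  have "card (dual_code n C) \<le> card (?R \<rightarrow>\<^sub>E (UNIV::'a set))"
  proof (rule card_inj_on_le[OF inj])
    show "(\<lambda>v. restrict v ?R) ` dual_code n C \<subseteq> ?R \<rightarrow>\<^sub>E UNIV" by (intro image_subsetI) simp
  qed (intro finite_PiE; simp)
  also have "\<dots> = card (UNIV::'a set) ^ (n - card J)"
    using J(1) finite_subset[OF J(1)] by (simp add: card_funcsetE card_Diff_subset)
  also have "\<dots> \<le> card (UNIV::'a set) ^ (n - k)"
    using J(2) card_UNIV_gt_1[where 'a='a] by (intro power_increasing) auto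
  finally show ?thesis .
qed

definition coord_scale :: "(nat \<Rightarrow> 'a::field) \<Rightarrow> (nat \<Rightarrow> 'a) \<Rightarrow> (nat \<Rightarrow> 'a)" where
  "coord_scale l v = (\<lambda>i. l i * v i)"

lemma coord_scale_inverse: "(\<And>i. l i \<noteq> 0) \<Longrightarrow> coord_scale (\<lambda>i. inverse (l i)) (coord_scale l v) = v"
  by (simp add: coord_scale_def fun_eq_iff)

lemma inj_coord_scale: "(\<And>i. l i \<noteq> 0) \<Longrightarrow> inj (coord_scale l)"
  by (metis injI coord_scale_inverse)

lemma linear_code_coord_scale:
  assumes "linear_code n C"
  shows "linear_code n (coord_scale l ` C)"
proof -
  have "coord_scale l x \<in> vecs n" if "x \<in> C" for x using that assms by (auto simp: linear_code_def vecs_def coord_scale_def)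
  moreover have "(\<lambda>i. 0) \<in> coord_scale l ` C"
  proof -
    have "coord_scale l (\<lambda>i. 0) = (\<lambda>i. 0)" by (simp add: coord_scale_def)
    then show ?thesis using assms by (metis image_eqI linear_code_def)
  qed
  moreover have "(\<lambda>i. coord_scale l x i + coord_scale l y i) \<in> coord_scale l ` C" if "x \<in> C" "y \<in> C" for x y
  proof -
    have "(\<lambda>i. coord_scale l x i + coord_scale l y i) = coord_scale l (\<lambda>i. x i + y i)" by (simp add: coord_scale_def fun_eq_iff algebra_simps)
    moreover have "(\<lambda>i. x i + y i) \<in> C" using that assms by (auto simp: linear_code_def)
    ultimately show ?thesis by blast
  qed
  moreover have "sc c (coord_scale l x) \<in> coord_scale l ` C" if "x \<in> C" for c x
  proof -
    have "sc c (coord_scale l x) = coord_scale l (sc c x)" by (simp add: coord_scale_def sc_def fun_eq_iff algebra_simps)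
    moreover have "sc c x \<in> C" using that assms by (auto simp: linear_code_def)
    ultimately show ?thesis by blast
  qed
  ultimately show ?thesis unfolding linear_code_def by blast
qed

lemma hamming_dist_coord_scale:
  "(\<And>i. l i \<noteq> 0) \<Longrightarrow> hamming_dist n (coord_scale l x) (coord_scale l y) = hamming_dist n x y"
  by (simp add: hamming_dist_def coord_scale_def)

lemma dual_code_coord_scale:
  assumes l: "\<And>i. l i \<noteq> 0"
  shows "dual_code n (coord_scale l ` C) = coord_scale (\<lambda>i. inverse (l i)) ` dual_code n C"
proof
  show "dual_code n (coord_scale l ` C) \<subseteq> coord_scale (\<lambda>i. inverse (l i)) ` dual_code n C"
  proof
    fix v assume v: "v \<in> dual_code n (coord_scale l ` C)"
    have "coord_scale l v \<in> dual_code n C"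
      using v by (auto simp: dual_code_def vecs_def coord_scale_def mult.assoc mult.left_commute)
    moreover have "v = coord_scale (\<lambda>i. inverse (l i)) (coord_scale l v)"
      using coord_scale_inverse[OF l] by simp
    ultimately show "v \<in> coord_scale (\<lambda>i. inverse (l i)) ` dual_code n C" by blast
  qed
  show "coord_scale (\<lambda>i. inverse (l i)) ` dual_code n C \<subseteq> dual_code n (coord_scale l ` C)"
  proof
    fix v assume "v \<in> coord_scale (\<lambda>i. inverse (l i)) ` dual_code n C"
    then obtain w where w: "w \<in> dual_code n C" "v = coord_scale (\<lambda>i. inverse (l i)) w" by blast
    have "(\<Sum>i<n. v i * coord_scale l c i) = (\<Sum>i<n. w i * c i)" for c
      using w(2) l by (intro sum.cong refl) (simp add: coord_scale_def field_simps)
    then show "v \<in> dual_code n (coord_scale l ` C)"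
      using w by (auto simp: dual_code_def vecs_def coord_scale_def)
  qed
qed

lemma code_params_coord_scale:
  fixes C :: "(nat \<Rightarrow> 'a::{field,finite}) set"
  assumes l: "\<And>i. l i \<noteq> 0" and cp: "code_params n k d C"
  shows "code_params n k d (coord_scale l ` C)"
proof -
  have lc: "linear_code n C" using cp by (simp add: code_params_def)
  have lc': "linear_code n (coord_scale l ` C)" by (rule linear_code_coord_scale[OF lc])
  have "inj (coord_scale l)" by (rule inj_coord_scale) (rule l)
  then have "card (coord_scale l ` C) = card C" by (simp add: card_image inj_on_subset)
  then have "vdim (coord_scale l ` C) = k"
    using card_linear_code[OF lc] cp by (intro vdim_eq_if_card[OF lc']) (simp add: code_params_def)
  moreover have "\<forall>x\<in>coord_scale l ` C. \<forall>y\<in>coord_scale l ` C. x \<noteq> y \<longrightarrow> int (hamming_dist n x y) \<ge> d"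
    using cp hamming_dist_coord_scale[OF l] by (auto simp: code_params_def)
  ultimately show ?thesis using lc' by (simp add: code_params_def)
qed

lemma code_params_dual_coord_scale:
  fixes C :: "(nat \<Rightarrow> 'a::{field,finite}) set"
  assumes l: "\<And>i. l i \<noteq> 0" and cp: "code_params n k d (dual_code n C)"
  shows "code_params n k d (dual_code n (coord_scale l ` C))"
  unfolding dual_code_coord_scale[OF l] using l by (intro code_params_coord_scale cp) simp

section \<open>Shrinking the hull\<close>

lemma inner_coord_scale_single:
  assumes "i < n"
  shows "(\<Sum>j<n. coord_scale (\<lambda>j. if j = i then t else 1) c j * coord_scale (\<lambda>j. if j = i then t else 1) c' j)
    = (\<Sum>j<n. c j * c' j) + (t^2 - 1) * (c i * c' i)"
proof -
  have "(\<Sum>j<n. coord_scale (\<lambda>j. if j = i then t else 1) c j * coord_scale (\<lambda>j. if j = i then t else 1) c' j)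
      = (\<Sum>j<n. c j * c' j + (if j = i then (t^2 - 1) * (c i * c' i) else 0))"
    by (intro sum.cong refl) (simp add: coord_scale_def power2_eq_square algebra_simps)
  also have "\<dots> = (\<Sum>j<n. c j * c' j) + (t^2 - 1) * (c i * c' i)"
    using assms by (simp add: sum.distrib)
  finally show ?thesis .
qed

text \<open>Scaling coordinate i by t changes the inner products by (t^2 - 1) c_i c'_i, so a hull
  word r with r_i \<noteq> 0 forces c_i = 0 on the new hull.\<close>

lemma code_hull_coord_scale:
  fixes C :: "(nat \<Rightarrow> 'a::field) set"
  assumes lc: "linear_code n C" and r: "r \<in> code_hull n C" and i: "i < n" and ri: "r i \<noteq> 0"
    and t: "t ^ 2 \<noteq> 1"
  shows "code_hull n (coord_scale (\<lambda>j. if j = i then t else 1) ` C) = {c \<in> code_hull n C. c i = 0}"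
proof -
  let ?l = "\<lambda>j. if j = i then t else 1"
  note key = inner_coord_scale_single[OF i, of t]
  have fix_i: "coord_scale ?l c = c" if "c i = 0" for c :: "nat \<Rightarrow> 'a"
    using that by (simp add: coord_scale_def fun_eq_iff)
  have rC: "r \<in> C" and rD: "\<forall>c\<in>C. (\<Sum>j<n. c j * r j) = 0"
    using r by (auto simp: code_hull_def dual_code_def mult.commute)
  show ?thesis
  proof
    show "code_hull n (coord_scale ?l ` C) \<subseteq> {c \<in> code_hull n C. c i = 0}"
    proof
      fix c' assume c': "c' \<in> code_hull n (coord_scale ?l ` C)"
      then obtain c where c: "c \<in> C" "c' = coord_scale ?l c" by (auto simp: code_hull_def)
      have cD: "\<forall>c2\<in>C. (\<Sum>j<n. coord_scale ?l c j * coord_scale ?l c2 j) = 0"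
        using c' c(2) by (auto simp: code_hull_def dual_code_def)
      then have "(t^2 - 1) * (c i * r i) = 0" using key[of c r] rC rD c(1) by simp
      then have ci: "c i = 0" using t ri by simp
      have "\<forall>c2\<in>C. (\<Sum>j<n. c j * c2 j) = 0" using cD key ci by simp
      then show "c' \<in> {c \<in> code_hull n C. c i = 0}" using c ci fix_i lc
        by (auto simp: code_hull_def dual_code_def linear_code_def)
    qed
    show "{c \<in> code_hull n C. c i = 0} \<subseteq> code_hull n (coord_scale ?l ` C)"
    proof
      fix c assume c: "c \<in> {c \<in> code_hull n C. c i = 0}"
      then have cC: "c \<in> C" and cD: "c \<in> dual_code n C" and ci: "c i = 0" by (auto simp: code_hull_def)
      have "c \<in> coord_scale ?l ` C" using cC fix_i[of c, OF ci] by (metis image_eqI)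
      moreover have "(\<Sum>j<n. c j * coord_scale ?l c2 j) = 0" if "c2 \<in> C" for c2
        using key[of c c2] fix_i[of c, OF ci] ci cD that by (auto simp: dual_code_def)
      ultimately show "c \<in> code_hull n (coord_scale ?l ` C)"
        using cD by (auto simp: code_hull_def dual_code_def)
    qed
  qed
qed

lemma card_linear_code_coord_zero:
  fixes H :: "(nat \<Rightarrow> 'a::{field,finite}) set"
  assumes lH: "linear_code n H" and r: "r \<in> H" and ri: "r i \<noteq> 0"
  shows "card H = card {c \<in> H. c i = 0} * card (UNIV::'a set)"
proof -
  let ?H0 = "{c \<in> H. c i = 0}"
  define \<psi> where "\<psi> = (\<lambda>(c, a). (\<lambda>j. c j + a * (r j / r i)))"
  have bij: "bij_betw \<psi> (?H0 \<times> UNIV) H"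
  proof (rule bij_betw_byWitness[where f' = "\<lambda>h. ((\<lambda>j. h j - h i * (r j / r i)), h i)"])
    show "\<forall>x\<in>?H0 \<times> UNIV. ((\<lambda>j. \<psi> x j - \<psi> x i * (r j / r i)), \<psi> x i) = x"
      using ri by (auto simp: \<psi>_def fun_eq_iff)
    show "\<forall>h\<in>H. \<psi> ((\<lambda>j. h j - h i * (r j / r i)), h i) = h"
      by (auto simp: \<psi>_def fun_eq_iff)
    show "\<psi> ` (?H0 \<times> UNIV) \<subseteq> H"
    proof
      fix h assume "h \<in> \<psi> ` (?H0 \<times> UNIV)"
      then obtain c a where ca: "c \<in> H" "h = (\<lambda>j. c j + a * (r j / r i))" by (auto simp: \<psi>_def)
      have "sc (a / r i) r \<in> H" using r lH by (auto simp: linear_code_def)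
      then have "(\<lambda>j. c j + sc (a / r i) r j) \<in> H" using ca(1) lH by (auto simp: linear_code_def)
      then show "h \<in> H" using ca(2) by (simp add: sc_def)
    qed
    show "(\<lambda>h. ((\<lambda>j. h j - h i * (r j / r i)), h i)) ` H \<subseteq> ?H0 \<times> UNIV"
    proof
      fix x assume "x \<in> (\<lambda>h. ((\<lambda>j. h j - h i * (r j / r i)), h i)) ` H"
      then obtain h where h: "h \<in> H" "x = ((\<lambda>j. h j - h i * (r j / r i)), h i)" by blast
      have "sc (- (h i / r i)) r \<in> H" using r lH by (auto simp: linear_code_def)
      then have "(\<lambda>j. h j + sc (- (h i / r i)) r j) \<in> H" using h(1) lH by (auto simp: linear_code_def)
      then have "(\<lambda>j. h j - h i * (r j / r i)) \<in> H" by (simp add: sc_def)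
      then show "x \<in> ?H0 \<times> UNIV" using h(2) ri by simp
    qed
  qed
  then have "card H = card (?H0 \<times> (UNIV::'a set))" by (simp add: bij_betw_same_card)
  then show ?thesis by (simp add: card_cartesian_product)
qed

lemma code_hull_reduce_step:
  fixes C :: "(nat \<Rightarrow> 'a::{field,finite}) set" and t :: 'a
  assumes t: "t \<noteq> 0" "t ^ 2 \<noteq> 1"
    and cp: "code_params n k d C" and cp': "code_params n k' d' (dual_code n C)"
    and r: "r \<in> code_hull n C" "r \<noteq> (\<lambda>j. 0)"
  obtains C' :: "(nat \<Rightarrow> 'a) set" where "code_params n k d C'" "code_params n k' d' (dual_code n C')"
    "card (code_hull n C') * card (UNIV::'a set) = card (code_hull n C)"
proof -
  have lc: "linear_code n C" using cp by (simp add: code_params_def)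
  obtain i where ri: "r i \<noteq> 0" using r(2) by auto
  have "r \<in> vecs n" using r(1) linear_code_hull[OF lc] by (auto simp: linear_code_def)
  then have i: "i < n" using ri by (auto simp: vecs_def intro: ccontr)
  let ?l = "\<lambda>j. if j = i then t else 1"
  have l0: "\<And>j. ?l j \<noteq> 0" using t by simp
  have "card (code_hull n (coord_scale ?l ` C)) * card (UNIV::'a set) = card (code_hull n C)"
    unfolding code_hull_coord_scale[OF lc r(1) i ri t(2)]
    using card_linear_code_coord_zero[OF linear_code_hull[OF lc] r(1) ri] by simp
  then show ?thesis
    using that code_params_coord_scale[of ?l, OF l0 cp] code_params_dual_coord_scale[of ?l, OF l0 cp']
    by blast
qed

lemma exists_code_hull_dim_1:
  fixes C :: "(nat \<Rightarrow> 'a::{field,finite}) set" and t :: 'a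
  assumes t: "t \<noteq> 0" "t ^ 2 \<noteq> 1"
    and cp: "code_params n k d C" and cp': "code_params n k' d' (dual_code n C)"
    and hull: "vdim (code_hull n C) \<noteq> 0"
  shows "\<exists>C' :: (nat \<Rightarrow> 'a) set. code_params n k d C' \<and> vdim (code_hull n C') = 1 \<and> code_params n k' d' (dual_code n C')"
proof -
  have reduce: "\<exists>C' :: (nat \<Rightarrow> 'a) set. code_params n k d C' \<and> vdim (code_hull n C') = 1 \<and> code_params n k' d' (dual_code n C')"
    if "vdim (code_hull n C) = Suc h" "code_params n k d C" "code_params n k' d' (dual_code n C)"
    for h and C :: "(nat \<Rightarrow> 'a) set"
    using that
  proof (induction h arbitrary: C)
    case (0 C)
    then show ?case by (intro exI[of _ C]) simp
  next
    case (Suc h C)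
    let ?Q = "card (UNIV::'a set)"
    have Q1: "?Q > 1" by (rule card_UNIV_gt_1)
    have lH: "linear_code n (code_hull n C)"
      using Suc.prems(2) by (intro linear_code_hull) (simp add: code_params_def)
    have cQ: "card (code_hull n C) = ?Q ^ Suc (Suc h)"
      using card_linear_code[OF lH] Suc.prems(1) by simp
    have "\<not> code_hull n C \<subseteq> {\<lambda>j. 0}"
    proof
      assume "code_hull n C \<subseteq> {\<lambda>j. 0}"
      then have "card (code_hull n C) \<le> card {\<lambda>j::nat. 0::'a}" by (rule card_mono[rotated]) simp
      moreover have "1 < ?Q ^ Suc (Suc h)" using Q1 by (rule one_less_power) simp
      ultimately show False using cQ by simp
    qed
    then obtain r where "r \<in> code_hull n C" "r \<noteq> (\<lambda>j. 0)" by blast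
    then obtain C' :: "(nat \<Rightarrow> 'a) set" where C': "code_params n k d C'" "code_params n k' d' (dual_code n C')"
      and cH: "card (code_hull n C') * ?Q = card (code_hull n C)"
      using code_hull_reduce_step[OF t Suc.prems(2,3)] by blast
    have "card (code_hull n C') * ?Q = ?Q ^ Suc h * ?Q" using cH cQ by (simp add: mult.commute)
    then have "card (code_hull n C') = ?Q ^ Suc h" using Q1 by simp
    moreover have "linear_code n (code_hull n C')"
      using C'(1) by (intro linear_code_hull) (simp add: code_params_def)
    ultimately have "vdim (code_hull n C') = Suc h" by (intro vdim_eq_if_card)
    then show ?case by (rule Suc.IH[OF _ C'])
  qed
  obtain h where h: "vdim (code_hull n C) = Suc h" using hull not0_implies_Suc by blast
  show ?thesis by (rule reduce[OF h cp cp'])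
qed

section \<open>The field with q0^2 elements\<close>

locale odd_square_field =
  fixes p m q0 :: nat and ty :: "'a::{field,finite} itself"
  assumes p_prime: "prime p" and p_odd: "odd p" and m_ge: "m \<ge> 1" and q0_def: "q0 = p ^ m"
    and card_F: "card (UNIV::'a set) = q0 ^ 2"
begin

abbreviation "q \<equiv> q0 ^ 2"

lemma q0_ge_3: "q0 \<ge> 3"
proof -
  have "p \<ge> 3" using p_prime p_odd prime_ge_2_nat[OF p_prime]
    by (metis One_nat_def Suc_1 dvd_refl le_antisym not_less_eq_eq numeral_3_eq_3)
  moreover have "p \<le> p ^ m" using m_ge prime_gt_0_nat[OF p_prime]
    by (simp add: self_le_power)
  ultimately show ?thesis using q0_def by simp
qed

lemma odd_q0: "odd q0" using p_odd q0_def by simp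

lemma q_ge_9: "q \<ge> 9"
proof -
  have "3*3 \<le> q0 * q0" using q0_ge_3 by (intro mult_mono) auto
  then show ?thesis by (simp add: power2_eq_square)
qed

lemma of_nat_p: "(of_nat p :: 'a) = 0"
proof -
  have "(of_nat p :: 'a) ^ (2*m) = of_nat (p ^ (2*m))" by simp
  also have "p ^ (2*m) = card (UNIV::'a set)" using card_F q0_def by (simp add: power_mult mult.commute)
  finally have "(of_nat p :: 'a) ^ (2*m) = 0" using of_nat_card_UNIV by simp
  then show ?thesis by simp
qed

lemma CHAR_eq_p: "CHAR('a) = p"
  using of_nat_p p_prime by (metis CHAR_not_1 One_nat_def of_nat_eq_0_iff_char_dvd prime_nat_iff)

lemma of_nat_q0: "(of_nat q0 :: 'a) = 0"
  using of_nat_p m_ge q0_def by simp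

lemma two_neq_zero: "(2::'a) \<noteq> 0"
proof
  assume h: "(2::'a) = 0"
  obtain k where "p = 2*k+1" using p_odd oddE by blast
  then have "(of_nat p :: 'a) = 2 * of_nat k + 1" by simp
  then have "(of_nat p :: 'a) = 1" using h by simp
  then show False using of_nat_p by simp
qed

lemma add_power_q0: "((a::'a) + b) ^ q0 = a ^ q0 + b ^ q0"
  by (rule freshmans_dream') (use CHAR_eq_p p_prime q0_def in auto)

lemma diff_power_q0: "((a::'a) - b) ^ q0 = a ^ q0 - b ^ q0"
  using add_power_q0[of a "-b"] odd_q0 by (simp add: power_minus_odd)

lemma power_q_minus_1: "(x::'a) \<noteq> 0 \<Longrightarrow> x ^ (q - 1) = 1"
  using power_card_minus_1[of x] card_F by simp

lemma power_q: "(x::'a) ^ q = x"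
  using power_card[of x] card_F by simp

lemma sum_power_eq_0: "I < q - 1 \<Longrightarrow> (\<Sum>x::'a\<in>UNIV. x ^ I) = 0"
  using sum_UNIV_power[where 'a='a, of I] card_F by simp

definition Tr :: "'a \<Rightarrow> 'a" where "Tr x = x ^ q0 + x"

lemma Tr_diff: "Tr (a - b) = Tr a - Tr b" by (simp add: Tr_def diff_power_q0)

definition Fq0 :: "'a set" where "Fq0 = {t. t ^ q0 = t}"

lemma power_q0_q0: "((x::'a) ^ q0) ^ q0 = x"
proof -
  have "x ^ (q0 * q0) = x" using power_q[of x] by (simp add: power2_eq_square)
  then show ?thesis by (simp add: power_mult[symmetric])
qed

lemma Tr_in_Fq0: "Tr x \<in> Fq0"
  by (simp add: Fq0_def Tr_def add_power_q0 power_q0_q0)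

lemma card_Fq0_le: "card Fq0 \<le> q0"
proof -
  have "Fq0 = {x. x ^ q0 + (-1) * x + 0 = 0}" by (auto simp: Fq0_def)
  then show ?thesis using card_roots_trinomial[of q0 "-1::'a" 0] q0_ge_3 by simp
qed

definition Tr_kernel :: "'a set" where "Tr_kernel = {x. Tr x = 0}"

lemma card_Tr_kernel_le: "card Tr_kernel \<le> q0"
proof -
  have "Tr_kernel = {x. x ^ q0 + 1 * x + 0 = 0}" by (auto simp: Tr_kernel_def Tr_def)
  then show ?thesis using card_roots_trinomial[of q0 "1::'a" 0] q0_ge_3 by simp
qed

lemma card_Tr_fibre_le: "card {x. Tr x = t} \<le> card Tr_kernel"
proof (cases "\<exists>x0. Tr x0 = t")
  case False then show ?thesis by simp
next
  case True
  then obtain x0 where x0: "Tr x0 = t" by blast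
  have "card {x. Tr x = t} \<le> card Tr_kernel"
    by (rule card_inj_on_le[of "\<lambda>x. x - x0"]) (auto simp: inj_on_def Tr_kernel_def Tr_diff x0)
  then show ?thesis .
qed

text \<open>Tr maps into F_q0, which has at most q0 elements, and its nonempty fibres are cosets of
  the kernel; as there are q0^2 elements in all, the kernel has at least q0 of them.\<close>

lemma card_Tr_kernel: "card Tr_kernel = q0"
proof -
  have "card (UNIV::'a set) = (\<Sum>t\<in>Fq0. card {x\<in>UNIV. Tr x = t})"
    using sum.group[of UNIV Fq0 Tr "\<lambda>_. 1::nat"] Tr_in_Fq0 by (simp add: image_subset_iff)
  also have "\<dots> \<le> (\<Sum>t\<in>Fq0. card Tr_kernel)" by (intro sum_mono) (use card_Tr_fibre_le in simp)
  also have "\<dots> = card Fq0 * card Tr_kernel" by simp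
  also have "\<dots> \<le> q0 * card Tr_kernel" using card_Fq0_le by simp
  finally have "q0 * q0 \<le> q0 * card Tr_kernel" using card_F by (simp add: power2_eq_square)
  then have "q0 \<le> card Tr_kernel" using q0_ge_3 by simp
  then show ?thesis using card_Tr_kernel_le by simp
qed

definition \<alpha> :: nat where "\<alpha> = (q0 + 1) div 2"

lemma q0_eq_odd: "\<exists>k. q0 = 2*k+1 \<and> \<alpha> = k + 1"
proof -
  obtain k where k: "q0 = 2*k+1" using odd_q0 oddE by blast
  then have "\<alpha> = k + 1" unfolding \<alpha>_def by simp
  then show ?thesis using k by blast
qed

lemma q0_eq_alpha: "q0 = 2 * \<alpha> - 1" using q0_eq_odd by auto
lemma alpha_ge_2: "\<alpha> \<ge> 2" using q0_ge_3 q0_eq_alpha by simp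

lemma q_minus_1_eq: "q - 1 = 2 * (\<alpha> * (q0 - 1))"
proof -
  obtain k where k: "q0 = 2*k+1" "\<alpha> = k + 1" using q0_eq_odd by blast
  have "(2*k+1)^2 - 1 = 2 * ((k+1) * (2*k))" by (simp add: power2_eq_square algebra_simps)
  then show ?thesis using k by simp
qed

definition euler_exp :: nat where "euler_exp = \<alpha> * (q0 - 1)"

definition nonzero_squares :: "'a set" where "nonzero_squares = (\<lambda>z. z ^ 2) ` (UNIV - {0})"
definition euler_roots :: "'a set" where "euler_roots = {y. y \<noteq> 0 \<and> y ^ euler_exp = 1}"

lemma card_nonzero_squares: "2 * card nonzero_squares = q - 1"
proof -
  have fin: "finite (UNIV - {0::'a})" by simp
  have img: "(\<lambda>z. z^2) ` (UNIV - {0::'a}) \<subseteq> nonzero_squares" by (simp add: nonzero_squares_def)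
  have "card (UNIV - {0::'a}) = (\<Sum>t\<in>nonzero_squares. card {z\<in>UNIV - {0}. z ^ 2 = t})"
    by (rule card_eq_sum_card_fibres[OF fin _ img]) simp
  also have "\<dots> = (\<Sum>t\<in>nonzero_squares. 2)"
  proof (rule sum.cong[OF refl])
    fix t assume "t \<in> nonzero_squares"
    then obtain z where z: "z \<noteq> 0" "t = z^2" by (auto simp: nonzero_squares_def)
    have e: "{w\<in>UNIV - {0}. w ^ 2 = t} = {z, -z}"
    proof -
      have "w ^ 2 = z ^ 2 \<longleftrightarrow> w = z \<or> w = -z" for w :: 'a
        by (rule power2_eq_iff)
      then show ?thesis using z by auto
    qed
    have "z \<noteq> -z"
    proof
      assume h: "z = -z"
      have "z + z = 0" using h by (metis add.right_inverse)
      then have "2 * z = 0" by (metis mult_2)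
      then show False using z(1) two_neq_zero by (metis mult_eq_0_iff)
    qed
    then show "card {w\<in>UNIV - {0}. w ^ 2 = t} = 2" unfolding e by simp
  qed
  also have "\<dots> = 2 * card nonzero_squares" by simp
  finally have "card (UNIV - {0::'a}) = 2 * card nonzero_squares" .
  moreover have "card (UNIV - {0::'a}) = q - 1" using card_F by (simp add: card_Diff_singleton)
  ultimately show ?thesis by simp
qed

lemma card_euler_roots_le: "card euler_roots \<le> euler_exp"
proof -
  have "euler_exp \<ge> 1" using alpha_ge_2 q0_ge_3 by (simp add: euler_exp_def)
  have "card euler_roots \<le> card {y. y ^ euler_exp = (1::'a)}" by (rule card_mono) (auto simp: euler_roots_def)
  also have "\<dots> \<le> euler_exp" using card_roots_power_eq \<open>euler_exp \<ge> 1\<close> by blast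
  finally show ?thesis .
qed

lemma nonzero_squares_subset: "nonzero_squares \<subseteq> euler_roots"
proof
  fix t assume "t \<in> nonzero_squares"
  then obtain z where z: "z \<noteq> 0" "t = z^2" by (auto simp: nonzero_squares_def)
  have "t ^ euler_exp = z ^ (2 * euler_exp)" using z by (simp add: power_mult)
  also have "2 * euler_exp = q - 1" using q_minus_1_eq by (simp add: euler_exp_def)
  finally show "t \<in> euler_roots" using power_q_minus_1[OF z(1)] z by (simp add: euler_roots_def)
qed

lemma nonzero_squares_eq: "nonzero_squares = euler_roots" and card_euler_roots: "card euler_roots = euler_exp"
proof -
  have "2 * euler_exp = q - 1" using q_minus_1_eq by (simp add: euler_exp_def)
  then have "card nonzero_squares = euler_exp" using card_nonzero_squares by simp
  moreover have "card nonzero_squares \<le> card euler_roots" using nonzero_squares_subset by (intro card_mono) auto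
  ultimately have "card euler_roots = euler_exp" using card_euler_roots_le by simp
  then show "card euler_roots = euler_exp" .
  show "nonzero_squares = euler_roots" using nonzero_squares_subset \<open>card nonzero_squares = euler_exp\<close> \<open>card euler_roots = euler_exp\<close>
    by (intro card_subset_eq) auto
qed

lemma two_power_q0: "(2::'a) ^ q0 = 2"
  using add_power_q0[of 1 1] by simp

text \<open>Euler's criterion: 2 lies in the prime field, so 2^((q - 1)/2) = (2^(q0 - 1))^\<alpha> = 1.\<close>

lemma exists_sqrt_2: "\<exists>\<sigma>::'a. \<sigma> ^ 2 = 2"
proof -
  have "q0 = Suc (q0 - 1)" using q0_ge_3 by simp
  then have "(2::'a) ^ q0 = 2 ^ (q0 - 1) * 2" by (metis power_Suc2)
  then have h: "(2::'a) ^ (q0 - 1) = 1" using two_power_q0 two_neq_zero by simp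
  have "(2::'a) ^ euler_exp = (2 ^ (q0 - 1)) ^ \<alpha>" by (simp add: euler_exp_def power_mult[symmetric] mult.commute)
  then have "(2::'a) \<in> euler_roots" using h two_neq_zero by (simp add: euler_roots_def)
  then have "(2::'a) \<in> nonzero_squares" using nonzero_squares_eq by simp
  then obtain z where "(2::'a) = z ^ 2" unfolding nonzero_squares_def by (rule imageE)
  then show ?thesis by metis
qed

lemma Fq0_power_q0_minus_1: "t \<in> Fq0 \<Longrightarrow> t \<noteq> 0 \<Longrightarrow> t ^ (q0 - 1) = 1"
proof -
  assume t: "t \<in> Fq0" "t \<noteq> 0"
  have "q0 = Suc (q0 - 1)" using q0_ge_3 by simp
  then have "t ^ q0 = t ^ (q0 - 1) * t" by (metis power_Suc2)
  then show ?thesis using t by (simp add: Fq0_def)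
qed

lemma alpha_q0: "\<alpha> * q0 = \<alpha> + euler_exp"
proof -
  have "\<alpha> * q0 = \<alpha> * (Suc (q0 - 1))" using q0_ge_3 by simp
  then show ?thesis by (simp add: euler_exp_def)
qed

lemma alpha_roots_eq: "t \<in> Fq0 \<Longrightarrow> t \<noteq> 0 \<Longrightarrow> {y. y ^ \<alpha> = t} = {y\<in>euler_roots. y ^ \<alpha> = t}"
proof -
  assume t: "t \<in> Fq0" "t \<noteq> 0"
  have "y \<in> euler_roots" if "y ^ \<alpha> = t" for y
  proof -
    have "y \<noteq> 0" using t that alpha_ge_2 by auto
    moreover have "y ^ euler_exp = (y ^ \<alpha>) ^ (q0 - 1)" by (simp add: euler_exp_def power_mult)
    ultimately show ?thesis using Fq0_power_q0_minus_1[OF t] that by (simp add: euler_roots_def)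
  qed
  then show ?thesis by auto
qed

text \<open>The \<alpha>-th power map sends the (q - 1)/2 = \<alpha> (q0 - 1) nonzero squares into the
  q0 - 1 nonzero elements of F_q0 with fibres of size at most \<alpha>, so all its fibres over
  F_q0 - {0} have exactly \<alpha> elements.\<close>

lemma card_alpha_roots: "t \<in> Fq0 \<Longrightarrow> t \<noteq> 0 \<Longrightarrow> card {y. y ^ \<alpha> = t} = \<alpha>"
proof -
  assume t: "t \<in> Fq0" "t \<noteq> 0"
  have img: "(\<lambda>y. y ^ \<alpha>) ` euler_roots \<subseteq> Fq0 - {0}"
  proof
    fix z assume "z \<in> (\<lambda>y. y ^ \<alpha>) ` euler_roots"
    then obtain y where y: "y \<in> euler_roots" "z = y ^ \<alpha>" by blast
    have "z ^ q0 = y ^ (\<alpha> * q0)" using y by (simp add: power_mult)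
    also have "\<dots> = y ^ \<alpha> * y ^ euler_exp" by (simp add: alpha_q0 power_add)
    also have "\<dots> = z" using y by (simp add: euler_roots_def)
    finally show "z \<in> Fq0 - {0}" using y by (simp add: Fq0_def euler_roots_def)
  qed
  have cB: "card (Fq0 - {0}) \<le> q0 - 1"
  proof -
    have "(0::'a) \<in> Fq0" using q0_ge_3 by (simp add: Fq0_def zero_power)
    then have "card (Fq0 - {0}) = card Fq0 - 1" by (simp add: card_Diff_singleton)
    then show ?thesis using card_Fq0_le by simp
  qed
  have "card {y\<in>euler_roots. y ^ \<alpha> = t} = \<alpha>"
  proof (rule card_fibre_eq_if_card_le[OF _ _ img cB, of \<alpha>])
    show "\<And>y. y \<in> Fq0 - {0} \<Longrightarrow> card {x \<in> euler_roots. x ^ \<alpha> = y} \<le> \<alpha>"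
    proof -
      fix y :: 'a
      have "card {x \<in> euler_roots. x ^ \<alpha> = y} \<le> card {x. x ^ \<alpha> = y}" by (rule card_mono) auto
      also have "\<dots> \<le> \<alpha>" by (rule card_roots_power_eq) (use alpha_ge_2 in simp)
      finally show "card {x \<in> euler_roots. x ^ \<alpha> = y} \<le> \<alpha>" .
    qed
    show "card euler_roots = \<alpha> * (q0 - 1)" using card_euler_roots by (simp add: euler_exp_def)
    show "t \<in> Fq0 - {0}" using t by simp
  qed auto
  then show ?thesis using alpha_roots_eq[OF t] by simp
qed

lemma one_in_Fq0: "(1::'a) \<in> Fq0" by (simp add: Fq0_def)

lemma exists_alpha_root_of_unity: "0 < J \<Longrightarrow> J < \<alpha> \<Longrightarrow> \<exists>z::'a. z ^ \<alpha> = 1 \<and> z ^ J \<noteq> 1"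
proof (rule ccontr)
  assume J: "0 < J" "J < \<alpha>" and n: "\<not> (\<exists>z::'a. z ^ \<alpha> = 1 \<and> z ^ J \<noteq> 1)"
  have "{z::'a. z ^ \<alpha> = 1} \<subseteq> {z. z ^ J = 1}" using n by auto
  then have "card {z::'a. z ^ \<alpha> = 1} \<le> card {z::'a. z ^ J = 1}" by (intro card_mono) auto
  also have "\<dots> \<le> J" by (rule card_roots_power_eq) (use J in simp)
  finally show False using card_alpha_roots[OF one_in_Fq0] J by simp
qed

lemma sum_alpha_roots_power:
  assumes t: "t \<in> Fq0" "t \<noteq> 0" and J: "0 < J" "J < \<alpha>"
  shows "(\<Sum>y\<in>{y. y ^ \<alpha> = t}. y ^ J) = 0"
proof -
  obtain z :: 'a where z: "z ^ \<alpha> = 1" "z ^ J \<noteq> 1" using exists_alpha_root_of_unity J by blast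
  have z0: "z \<noteq> 0" using z alpha_ge_2 by (metis power_0_left zero_neq_one not_numeral_le_zero le_zero_eq not_gr_zero)
  let ?F = "{y. y ^ \<alpha> = t}"
  have "(\<Sum>y\<in>?F. (z * y) ^ J) = (\<Sum>y\<in>?F. y ^ J)"
    by (rule sum.reindex_bij_witness[of _ "\<lambda>y. y / z" "\<lambda>y. z * y"])
       (use z z0 in \<open>auto simp: power_mult_distrib power_divide\<close>)
  then have "z ^ J * (\<Sum>y\<in>?F. y ^ J) = (\<Sum>y\<in>?F. y ^ J)"
    by (simp add: power_mult_distrib sum_distrib_left)
  then have "(z ^ J - 1) * (\<Sum>y\<in>?F. y ^ J) = 0" by (simp add: algebra_simps)
  then show ?thesis using z by simp
qed

end

context odd_square_field
begin

definition pole_order :: "nat \<times> nat \<Rightarrow> nat" where "pole_order z = \<alpha> * fst z + q0 * snd z"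

definition L_basis :: "nat \<Rightarrow> (nat \<times> nat) set" where
  "L_basis D = {z. snd z < \<alpha> \<and> pole_order z \<le> D}"

lemma coprime_alpha_q0: "coprime \<alpha> q0"
proof -
  have "q0 + 1 = 2 * \<alpha>" using q0_eq_alpha alpha_ge_2 by simp
  show ?thesis
  proof (rule coprimeI)
    fix c assume "c dvd \<alpha>" "c dvd q0"
    then have "c dvd 2 * \<alpha>" "c dvd q0" by auto
    then have "c dvd (2 * \<alpha> - q0)" by (rule dvd_diff_nat)
    moreover have "2 * \<alpha> - q0 = 1" using \<open>q0 + 1 = 2 * \<alpha>\<close> by simp
    ultimately show "is_unit c" by simp
  qed
qed

lemma pole_order_inj:
  assumes "snd a < \<alpha>" "snd b < \<alpha>" "pole_order a = pole_order b"
  shows "a = b"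
proof -
  obtain i j i' j' where a: "a = (i,j)" and b: "b = (i',j')" by (cases a, cases b) auto
  have n: "\<alpha> * i + q0 * j = \<alpha> * i' + q0 * j'" using assms(3) unfolding a b pole_order_def by simp
  have "int (\<alpha> * i + q0 * j) = int (\<alpha> * i' + q0 * j')" using n by (rule arg_cong)
  then have n2: "int \<alpha> * int i + int q0 * int j = int \<alpha> * int i' + int q0 * int j'" by simp
  have e: "int \<alpha> * (int i - int i') = int q0 * (int j' - int j)"
    using n2 by (simp add: right_diff_distrib)
  have "int \<alpha> dvd int q0 * (int j' - int j)" using e by (metis dvd_triv_left)
  moreover have "coprime (int \<alpha>) (int q0)" using coprime_alpha_q0 by simp
  ultimately have "int \<alpha> dvd (int j' - int j)" using coprime_dvd_mult_right_iff by blast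
  moreover have "\<bar>int j' - int j\<bar> < int \<alpha>" using assms(1,2) a b by auto
  ultimately have "int j' - int j = 0"
  proof -
    assume d: "int \<alpha> dvd (int j' - int j)" and l: "\<bar>int j' - int j\<bar> < int \<alpha>"
    show ?thesis
    proof (rule ccontr)
      assume "int j' - int j \<noteq> 0"
      from dvd_imp_le_int[OF this d] l show False by simp
    qed
  qed
  then have "j = j'" by simp
  then have "i = i'" using e alpha_ge_2 by simp
  then show ?thesis using a b \<open>j = j'\<close> by simp
qed

lemma finite_L_basis: "finite (L_basis D)"
proof -
  have "L_basis D \<subseteq> {..D} \<times> {..<\<alpha>}"
  proof
    fix z assume "z \<in> L_basis D"
    then have "snd z < \<alpha>" "\<alpha> * fst z + q0 * snd z \<le> D" by (auto simp: L_basis_def pole_order_def)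
    moreover have "fst z \<le> \<alpha> * fst z" using alpha_ge_2 by simp
    ultimately have "fst z \<le> D" by linarith
    with \<open>snd z < \<alpha>\<close> show "z \<in> {..D} \<times> {..<\<alpha>}" by (cases z) auto
  qed
  then show ?thesis by (rule finite_subset) auto
qed

lemma L_basis_mono: "D \<le> D' \<Longrightarrow> L_basis D \<subseteq> L_basis D'"
  by (auto simp: L_basis_def)

lemma card_L_basis_le_add: "D' \<le> D \<Longrightarrow> card (L_basis D) \<le> card (L_basis D') + (D - D')"
proof -
  assume le: "D' \<le> D"
  let ?X = "{z \<in> L_basis D. D' < pole_order z}"
  have "L_basis D \<subseteq> L_basis D' \<union> ?X" by (auto simp: L_basis_def)
  then have "card (L_basis D) \<le> card (L_basis D' \<union> ?X)" by (intro card_mono) (use finite_L_basis in auto)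
  also have "\<dots> \<le> card (L_basis D') + card ?X" by (rule card_Un_le)
  also have "card ?X \<le> card {D'<..D}"
  proof (rule card_inj_on_le[of pole_order])
    show "inj_on pole_order ?X" unfolding inj_on_def L_basis_def using pole_order_inj by blast
    show "pole_order ` ?X \<subseteq> {D'<..D}" by (auto simp: L_basis_def)
  qed auto
  finally show ?thesis by simp
qed

lemma card_times_alpha_le: "card {i. \<alpha> * i \<le> X} = X div \<alpha> + 1"
proof -
  have "{i. \<alpha> * i \<le> X} = {..X div \<alpha>}"
    using alpha_ge_2 by (auto simp: less_eq_div_iff_mult_less_eq mult.commute)
  then show ?thesis by simp
qed

lemma card_L_basis_eq_sum: "card (L_basis D) = (\<Sum>j<\<alpha>. card {i. \<alpha> * i + q0 * j \<le> D})"
proof -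
  have "L_basis D = (\<lambda>(j,i). (i,j)) ` (SIGMA j:{..<\<alpha>}. {i. \<alpha> * i + q0 * j \<le> D})"
    by (auto simp: L_basis_def pole_order_def image_iff)
  moreover have "inj_on (\<lambda>(j,i). (i,j)) (SIGMA j:{..<\<alpha>}. {i. \<alpha> * i + q0 * j \<le> D})"
    by (auto simp: inj_on_def)
  ultimately have "card (L_basis D) = card (SIGMA j:{..<\<alpha>}. {i. \<alpha> * i + q0 * j \<le> D})"
    by (simp add: card_image)
  also have "\<dots> = (\<Sum>j<\<alpha>. card {i. \<alpha> * i + q0 * j \<le> D})"
  proof (rule card_SigmaI)
    show "\<forall>j\<in>{..<\<alpha>}. finite {i. \<alpha> * i + q0 * j \<le> D}"
    proof
      fix j
      have "{i. \<alpha> * i + q0 * j \<le> D} \<subseteq> {..D}"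
      proof
        fix i assume "i \<in> {i. \<alpha> * i + q0 * j \<le> D}"
        then have "\<alpha> * i + q0 * j \<le> D" by simp
        moreover have "i \<le> \<alpha> * i" using alpha_ge_2 by simp
        ultimately have "i \<le> D" by linarith
        then show "i \<in> {..D}" by simp
      qed
      then show "finite {i. \<alpha> * i + q0 * j \<le> D}" by (rule finite_subset) auto
    qed
  qed auto
  finally show ?thesis .
qed

lemma card_column_int:
  assumes "int D + int \<alpha> \<ge> int q0 * int j"
  shows "int (card {i. \<alpha> * i + q0 * j \<le> D}) = (int D - int q0 * int j) div int \<alpha> + 1"
proof (cases "q0 * j \<le> D")
  case True
  have "{i. \<alpha> * i + q0 * j \<le> D} = {i. \<alpha> * i \<le> D - q0 * j}" using True by auto
  then have "card {i. \<alpha> * i + q0 * j \<le> D} = (D - q0 * j) div \<alpha> + 1" using card_times_alpha_le by simp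
  then show ?thesis using True by (simp add: zdiv_int of_nat_diff)
next
  case False
  then have "{i. \<alpha> * i + q0 * j \<le> D} = {}" by auto
  moreover have "(int D - int q0 * int j) div int \<alpha> = -1"
  proof -
    have "int D - int q0 * int j < 0" using False by (simp add: of_nat_mult[symmetric] del: of_nat_mult)
    moreover have "int D - int q0 * int j \<ge> - int \<alpha>" using assms by simp
    ultimately have "0 \<le> (int D - int q0 * int j) + int \<alpha>" "(int D - int q0 * int j) + int \<alpha> < int \<alpha>" by auto
    then have "((int D - int q0 * int j) + int \<alpha>) div int \<alpha> = 0" by (rule div_pos_pos_trivial)
    moreover have "((int D - int q0 * int j) + int \<alpha>) div int \<alpha> = (int D - int q0 * int j) div int \<alpha> + 1"
      using alpha_ge_2 by (simp add: div_add_self2)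
    ultimately show ?thesis by simp
  qed
  ultimately show ?thesis by simp
qed

definition genus :: nat where "genus = (\<alpha> - 1)^2"

lemma int_genus: "int genus = (int \<alpha> - 1)^2"
  using alpha_ge_2 by (simp add: genus_def of_nat_diff)

lemma card_column_L_basis:
  assumes D: "D + 1 \<ge> 2 * genus" and j: "j < \<alpha>"
  shows "int (card {i. \<alpha> * i + q0 * j \<le> D})
    = int (D div \<alpha>) - 2 * int j + 1 + (if \<alpha> \<le> D mod \<alpha> + j then 1 else 0)"
proof -
  define A B where "A = D div \<alpha>" and "B = D mod \<alpha>"
  have AB: "D = \<alpha> * A + B" "B < \<alpha>" using alpha_ge_2 by (simp_all add: A_def B_def)
  have q0e: "int q0 = 2 * int \<alpha> - 1" using q0_eq_alpha alpha_ge_2 by simp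
  have "int q0 * int j \<le> int q0 * (int \<alpha> - 1)" using j q0e alpha_ge_2 by (intro mult_left_mono) auto
  also have "\<dots> = 2 * (int \<alpha> - 1)^2 + (int \<alpha> - 1)" by (simp add: q0e power2_eq_square algebra_simps)
  also have "\<dots> \<le> int D + int \<alpha>" using D int_genus by simp
  finally have "int (card {i. \<alpha> * i + q0 * j \<le> D}) = (int D - int q0 * int j) div int \<alpha> + 1"
    by (intro card_column_int) simp
  moreover have "int D - int q0 * int j = int \<alpha> * (int A - 2 * int j) + (int B + int j)"
    using AB by (simp add: q0e algebra_simps)
  then have "(int D - int q0 * int j) div int \<alpha> = (int A - 2 * int j) + (int B + int j) div int \<alpha>"
    using alpha_ge_2 by simp
  moreover have "(int B + int j) div int \<alpha> = (if \<alpha> \<le> B + j then 1 else 0)"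
  proof (cases "\<alpha> \<le> B + j")
    case True
    then have "0 \<le> (int B + int j) - int \<alpha>" "(int B + int j) - int \<alpha> < int \<alpha>" using AB j by auto
    then have "((int B + int j) - int \<alpha>) div int \<alpha> = 0" by (rule div_pos_pos_trivial)
    moreover have "((int B + int j) - int \<alpha>) div int \<alpha> = (int B + int j) div int \<alpha> - 1"
      using div_add_self2[of "int \<alpha>" "int B + int j - int \<alpha>"] alpha_ge_2 by simp
    ultimately show ?thesis using True by simp
  next
    case False
    then show ?thesis by (simp add: div_pos_pos_trivial)
  qed
  ultimately show ?thesis by (simp add: A_def B_def)
qed

text \<open>Riemann-Roch: l(D P\<infinity>) = D + 1 - g once D \<ge> 2g - 1.\<close>

lemma card_L_basis:
  assumes D: "D + 1 \<ge> 2 * genus"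
  shows "card (L_basis D) = D + 1 - genus"
proof -
  define A B where "A = D div \<alpha>" and "B = D mod \<alpha>"
  have AB: "D = \<alpha> * A + B" "B < \<alpha>" using alpha_ge_2 by (simp_all add: A_def B_def)
  have "int (card (L_basis D)) = (\<Sum>j<\<alpha>. int (card {i. \<alpha> * i + q0 * j \<le> D}))"
    by (simp add: card_L_basis_eq_sum)
  also have "\<dots> = (\<Sum>j<\<alpha>. int A - 2 * int j + 1 + (if \<alpha> \<le> B + j then 1 else 0))"
    using card_column_L_basis[OF D] by (simp add: A_def B_def)
  also have "\<dots> = int \<alpha> * (int A + 1) - 2 * (\<Sum>j<\<alpha>. int j) + (\<Sum>j<\<alpha>. (if \<alpha> \<le> B + j then 1 else 0))"
    by (simp add: sum.distrib sum_subtractf sum_distrib_left algebra_simps)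
  also have "(\<Sum>j<\<alpha>. (if \<alpha> \<le> B + j then 1 else 0::int)) = int B"
  proof -
    have "(\<Sum>j<\<alpha>. (if \<alpha> \<le> B + j then 1 else 0::int)) = int (card {j. j < \<alpha> \<and> \<alpha> \<le> B + j})"
      by (simp add: sum.If_cases Int_def)
    also have "{j. j < \<alpha> \<and> \<alpha> \<le> B + j} = {\<alpha> - B..<\<alpha>}" using AB by auto
    finally show ?thesis using AB by simp
  qed
  finally have "int (card (L_basis D)) = int \<alpha> * (int A + 1) - int \<alpha> * (int \<alpha> - 1) + int B"
    using double_sum_lessThan_int[of \<alpha>] by simp
  also have "\<dots> = int D + 1 - int genus"
    using AB int_genus by (simp add: power2_eq_square algebra_simps)
  finally show ?thesis by simp
qed

end

section \<open>Functions on the curve\<close>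

text \<open>A function is represented by its coefficients on the monomials x^i y^j.\<close>

definition eval_coeffs :: "(nat \<times> nat) set \<Rightarrow> (nat \<times> nat \<Rightarrow> 'a::field) \<Rightarrow> 'a \<times> 'a \<Rightarrow> 'a" where
  "eval_coeffs M c P = (\<Sum>z\<in>M. c z * fst P ^ fst z * snd P ^ snd z)"

lemma eval_coeffs_superset:
  assumes "finite M'" "M \<subseteq> M'" "c \<in> supported_in M"
  shows "eval_coeffs M' c P = eval_coeffs M c P"
  unfolding eval_coeffs_def using assms by (intro sum.mono_neutral_right) (auto simp: supported_in_def)

definition single_coeff :: "nat \<times> nat \<Rightarrow> nat \<times> nat \<Rightarrow> 'a::field" where
  "single_coeff z = (\<lambda>w. if w = z then 1 else 0)"

lemma eval_single_coeff: "finite M \<Longrightarrow> w \<in> M \<Longrightarrow> eval_coeffs M (single_coeff w) P = fst P ^ fst w * snd P ^ snd w"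
proof -
  assume "finite M" "w \<in> M"
  have "eval_coeffs M (single_coeff w) P = (\<Sum>z\<in>M. if z = w then fst P ^ fst z * snd P ^ snd z else 0)"
    unfolding eval_coeffs_def single_coeff_def by (intro sum.cong) auto
  also have "\<dots> = fst P ^ fst w * snd P ^ snd w" using \<open>finite M\<close> \<open>w \<in> M\<close> by (simp add: sum.delta)
  finally show ?thesis .
qed

lemma eval_coeffs_add: "eval_coeffs M (\<lambda>w. f w + g w) P = eval_coeffs M f P + eval_coeffs M g P"
  unfolding eval_coeffs_def by (simp add: sum.distrib algebra_simps)

lemma eval_coeffs_diff: "eval_coeffs M (\<lambda>w. f w - g w) P = eval_coeffs M f P - eval_coeffs M g P"
  unfolding eval_coeffs_def by (simp add: sum_subtractf algebra_simps)

lemma eval_coeffs_smult: "eval_coeffs M (\<lambda>w. a * f w) P = a * eval_coeffs M f P"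
  unfolding eval_coeffs_def by (simp add: sum_distrib_left algebra_simps)

lemma eval_coeffs_sum: "eval_coeffs M (\<lambda>w. \<Sum>i\<in>I. h i w) P = (\<Sum>i\<in>I. eval_coeffs M (h i) P)"
  unfolding eval_coeffs_def by (simp add: sum_distrib_right sum.swap[of _ I])

lemma eval_coeffs_zero: "eval_coeffs M (\<lambda>w. 0) P = 0"
  unfolding eval_coeffs_def by simp

context odd_square_field
begin

definition curve_points :: "('a \<times> 'a) set" where "curve_points = {P. snd P ^ \<alpha> = Tr (fst P)}"

text \<open>Coefficients of x^i y^j for j < 2\<alpha>, rewritten with y^\<alpha> = x^q0 + x so that j < \<alpha>;
  coeff_mult multiplies two functions in this normal form.\<close>

definition reduced_monomial :: "nat \<times> nat \<Rightarrow> nat \<times> nat \<Rightarrow> 'a" where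
  "reduced_monomial z = (if snd z < \<alpha> then single_coeff z
     else (\<lambda>w. single_coeff (fst z + q0, snd z - \<alpha>) w + single_coeff (fst z + 1, snd z - \<alpha>) w))"

definition exp_add :: "nat \<times> nat \<Rightarrow> nat \<times> nat \<Rightarrow> nat \<times> nat" where
  "exp_add a b = (fst a + fst b, snd a + snd b)"

definition coeff_mult ::
    "(nat \<times> nat) set \<Rightarrow> (nat \<times> nat) set \<Rightarrow> (nat \<times> nat \<Rightarrow> 'a) \<Rightarrow> (nat \<times> nat \<Rightarrow> 'a) \<Rightarrow> nat \<times> nat \<Rightarrow> 'a"
  where
  "coeff_mult M1 M2 f g = (\<lambda>w. \<Sum>a\<in>M1. \<Sum>b\<in>M2. f a * g b * reduced_monomial (exp_add a b) w)"

lemma coeffs_of_x: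
  assumes "\<alpha> \<le> D"
  shows "single_coeff (1, 0) \<in> supported_in (L_basis D)"
    and "eval_coeffs (L_basis D) (single_coeff (1, 0)) P = fst P"
proof -
  have x: "(1, 0) \<in> L_basis D" using assms alpha_ge_2 by (simp add: L_basis_def pole_order_def)
  then show "single_coeff (1, 0) \<in> supported_in (L_basis D)"
    by (auto simp: supported_in_def single_coeff_def)
  show "eval_coeffs (L_basis D) (single_coeff (1, 0)) P = fst P"
    using eval_single_coeff[OF finite_L_basis x] by simp
qed

lemma pole_order_exp_add: "pole_order (exp_add a b) = pole_order a + pole_order b"
  by (simp add: pole_order_def exp_add_def algebra_simps)

lemma pole_order_reduce_1: "\<not> snd z < \<alpha> \<Longrightarrow> pole_order (fst z + q0, snd z - \<alpha>) = pole_order z"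
proof -
  assume "\<not> snd z < \<alpha>"
  then obtain k where k: "snd z = \<alpha> + k" by (metis le_add_diff_inverse not_less)
  show ?thesis by (simp add: pole_order_def k algebra_simps)
qed

lemma pole_order_reduce_2: "\<not> snd z < \<alpha> \<Longrightarrow> pole_order (fst z + 1, snd z - \<alpha>) \<le> pole_order z"
proof -
  assume "\<not> snd z < \<alpha>"
  then obtain k where k: "snd z = \<alpha> + k" by (metis le_add_diff_inverse not_less)
  have "pole_order (fst z + 1, snd z - \<alpha>) + \<alpha> * q0 = pole_order z + \<alpha>" by (simp add: pole_order_def k algebra_simps)
  moreover have "\<alpha> \<le> \<alpha> * q0" using q0_ge_3 by simp
  ultimately show ?thesis by linarith
qed

lemma reduced_monomial_supported:
  assumes "snd z < 2 * \<alpha>"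
  shows "reduced_monomial z \<in> supported_in (L_basis (pole_order z))"
proof (cases "snd z < \<alpha>")
  case True
  then show ?thesis by (auto simp: reduced_monomial_def supported_in_def single_coeff_def L_basis_def)
next
  case False
  have q1: "pole_order (fst z + q0, snd z - \<alpha>) = pole_order z" using False pole_order_reduce_1 by simp
  have q2: "pole_order (fst z + 1, snd z - \<alpha>) \<le> pole_order z" using False pole_order_reduce_2 by simp
  have "snd z - \<alpha> < \<alpha>" using assms False by simp
  then show ?thesis using False q1 q2 by (auto simp: reduced_monomial_def supported_in_def single_coeff_def L_basis_def)
qed

lemma eval_reduced_monomial:
  assumes P: "P \<in> curve_points" and z: "snd z < 2 * \<alpha>"
  shows "eval_coeffs (L_basis (pole_order z)) (reduced_monomial z) P = fst P ^ fst z * snd P ^ snd z"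
proof (cases "snd z < \<alpha>")
  case True
  have "z \<in> L_basis (pole_order z)" using True by (simp add: L_basis_def)
  then show ?thesis using True by (simp add: reduced_monomial_def eval_single_coeff finite_L_basis)
next
  case False
  have q1: "pole_order (fst z + q0, snd z - \<alpha>) = pole_order z" using False pole_order_reduce_1 by simp
  have q2: "pole_order (fst z + 1, snd z - \<alpha>) \<le> pole_order z" using False pole_order_reduce_2 by simp
  have s: "snd z - \<alpha> < \<alpha>" using z False by simp
  have m1: "(fst z + q0, snd z - \<alpha>) \<in> L_basis (pole_order z)" using q1 s by (simp add: L_basis_def)
  have m2: "(fst z + 1, snd z - \<alpha>) \<in> L_basis (pole_order z)" using q2 s by (simp add: L_basis_def)
  have "eval_coeffs (L_basis (pole_order z)) (reduced_monomial z) P = fst P ^ (fst z + q0) * snd P ^ (snd z - \<alpha>) + fst P ^ (fst z + 1) * snd P ^ (snd z - \<alpha>)"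
    using False m1 m2 by (simp add: reduced_monomial_def eval_coeffs_add eval_single_coeff finite_L_basis)
  also have "\<dots> = fst P ^ fst z * snd P ^ (snd z - \<alpha>) * Tr (fst P)"
    by (simp add: Tr_def power_add algebra_simps)
  also have "\<dots> = fst P ^ fst z * snd P ^ (snd z - \<alpha>) * snd P ^ \<alpha>" using P by (simp add: curve_points_def)
  also have "\<dots> = fst P ^ fst z * snd P ^ snd z" using False
    by (simp add: mult.assoc power_add[symmetric])
  finally show ?thesis .
qed

lemma coeff_mult_supported:
  assumes "f \<in> supported_in (L_basis D1)" "g \<in> supported_in (L_basis D2)"
  shows "coeff_mult (L_basis D1) (L_basis D2) f g \<in> supported_in (L_basis (D1 + D2))"
proof -
  have "reduced_monomial (exp_add a b) w = 0" if "a \<in> L_basis D1" "b \<in> L_basis D2" "w \<notin> L_basis (D1 + D2)" for a b w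
  proof -
    have "snd (exp_add a b) < 2 * \<alpha>" using that by (simp add: exp_add_def L_basis_def)
    then have r: "reduced_monomial (exp_add a b) \<in> supported_in (L_basis (pole_order (exp_add a b)))" by (rule reduced_monomial_supported)
    have "L_basis (pole_order (exp_add a b)) \<subseteq> L_basis (D1 + D2)" using that
      by (intro L_basis_mono) (simp add: pole_order_exp_add L_basis_def)
    then have "w \<notin> L_basis (pole_order (exp_add a b))" using that by blast
    then show ?thesis using r unfolding supported_in_def by blast
  qed
  then show ?thesis by (auto simp: supported_in_def coeff_mult_def intro!: sum.neutral)
qed

lemma eval_coeff_mult:
  assumes P: "P \<in> curve_points" and f: "f \<in> supported_in (L_basis D1)" and g: "g \<in> supported_in (L_basis D2)"
  shows "eval_coeffs (L_basis (D1 + D2)) (coeff_mult (L_basis D1) (L_basis D2) f g) P = eval_coeffs (L_basis D1) f P * eval_coeffs (L_basis D2) g P"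
proof -
  have "eval_coeffs (L_basis (D1 + D2)) (coeff_mult (L_basis D1) (L_basis D2) f g) P
      = (\<Sum>a\<in>L_basis D1. \<Sum>b\<in>L_basis D2. f a * g b * eval_coeffs (L_basis (D1 + D2)) (reduced_monomial (exp_add a b)) P)"
    unfolding coeff_mult_def by (simp add: eval_coeffs_sum eval_coeffs_smult mult.commute mult.left_commute)
  also have "\<dots> = (\<Sum>a\<in>L_basis D1. \<Sum>b\<in>L_basis D2. f a * g b * (fst P ^ fst a * snd P ^ snd a) * (fst P ^ fst b * snd P ^ snd b))"
  proof (intro sum.cong refl)
    fix a b assume ab: "a \<in> L_basis D1" "b \<in> L_basis D2"
    have s: "snd (exp_add a b) < 2 * \<alpha>" using ab by (simp add: exp_add_def L_basis_def)
    have "L_basis (pole_order (exp_add a b)) \<subseteq> L_basis (D1 + D2)" using ab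
      by (intro L_basis_mono) (simp add: pole_order_exp_add L_basis_def)
    then have "eval_coeffs (L_basis (D1 + D2)) (reduced_monomial (exp_add a b)) P = eval_coeffs (L_basis (pole_order (exp_add a b))) (reduced_monomial (exp_add a b)) P"
      by (intro eval_coeffs_superset reduced_monomial_supported s finite_L_basis)
    also have "\<dots> = fst P ^ fst (exp_add a b) * snd P ^ snd (exp_add a b)" by (rule eval_reduced_monomial[OF P s])
    finally show "f a * g b * eval_coeffs (L_basis (D1 + D2)) (reduced_monomial (exp_add a b)) P = f a * g b * (fst P ^ fst a * snd P ^ snd a) * (fst P ^ fst b * snd P ^ snd b)"
      by (simp add: exp_add_def power_add algebra_simps)
  qed
  also have "\<dots> = eval_coeffs (L_basis D1) f P * eval_coeffs (L_basis D2) g P"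
    unfolding eval_coeffs_def by (simp add: sum_product algebra_simps)
  finally show ?thesis .
qed

lemma coeff_mult_diff:
  "coeff_mult M1 M2 f (\<lambda>w. g w - g' w) = (\<lambda>w. coeff_mult M1 M2 f g w - coeff_mult M1 M2 f g' w)"
  unfolding coeff_mult_def by (simp add: sum_subtractf algebra_simps fun_eq_iff)

lemma leading_exponent_exists:
  assumes "f \<in> supported_in (L_basis D)" "f \<noteq> (\<lambda>w. 0)"
  shows "\<exists>a0. f a0 \<noteq> 0 \<and> (\<forall>a. f a \<noteq> 0 \<longrightarrow> pole_order a \<le> pole_order a0) \<and> (\<forall>a. f a \<noteq> 0 \<longrightarrow> pole_order a = pole_order a0 \<longrightarrow> a = a0)"
proof -
  let ?S = "{a. f a \<noteq> 0}"
  have sub: "?S \<subseteq> L_basis D" using assms(1) by (auto simp: supported_in_def)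
  then have fin: "finite ?S" using finite_L_basis finite_subset by blast
  have ne: "?S \<noteq> {}" using assms(2) by auto
  let ?W = "Max (pole_order ` ?S)"
  have "?W \<in> pole_order ` ?S" using fin ne by (intro Max_in) auto
  then obtain a0 where a0: "f a0 \<noteq> 0" "pole_order a0 = ?W" by auto
  have le: "pole_order a \<le> pole_order a0" if "f a \<noteq> 0" for a using that fin a0 by (simp add: Max_ge)
  have eq: "a = a0" if "f a \<noteq> 0" "pole_order a = pole_order a0" for a
    using pole_order_inj[of a a0] that sub a0 by (auto simp: L_basis_def)
  show ?thesis using a0 le eq by blast
qed

text \<open>Distinct basis monomials have distinct pole orders, so the product of the leading terms
  is the only contribution to the product at the top pole order.\<close>

lemma coeff_mult_nonzero:
  assumes f: "f \<in> supported_in (L_basis D1)" and g: "g \<in> supported_in (L_basis D2)"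
    and f0: "f \<noteq> (\<lambda>w. 0)" and g0: "g \<noteq> (\<lambda>w. 0)"
  shows "coeff_mult (L_basis D1) (L_basis D2) f g \<noteq> (\<lambda>w. 0)"
proof -
  obtain a0 where a0: "f a0 \<noteq> 0" "\<And>a. f a \<noteq> 0 \<Longrightarrow> pole_order a \<le> pole_order a0" "\<And>a. f a \<noteq> 0 \<Longrightarrow> pole_order a = pole_order a0 \<Longrightarrow> a = a0"
    using leading_exponent_exists[OF f f0] by blast
  obtain b0 where b0: "g b0 \<noteq> 0" "\<And>b. g b \<noteq> 0 \<Longrightarrow> pole_order b \<le> pole_order b0" "\<And>b. g b \<noteq> 0 \<Longrightarrow> pole_order b = pole_order b0 \<Longrightarrow> b = b0"
    using leading_exponent_exists[OF g g0] by blast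
  have a0M: "a0 \<in> L_basis D1" using f a0(1) unfolding supported_in_def by blast
  have b0M: "b0 \<in> L_basis D2" using g b0(1) unfolding supported_in_def by blast
  define t where "t = exp_add a0 b0"
  define \<rho> where "\<rho> = (if snd t < \<alpha> then t else (fst t + q0, snd t - \<alpha>))"
  have wr: "pole_order \<rho> = pole_order t" unfolding \<rho>_def using pole_order_reduce_1[of t] by auto
  have rt: "reduced_monomial t \<rho> = 1"
  proof (cases "snd t < \<alpha>")
    case True then show ?thesis by (simp add: \<rho>_def reduced_monomial_def single_coeff_def)
  next
    case False
    have "(fst t + 1, snd t - \<alpha>) \<noteq> (fst t + q0, snd t - \<alpha>)" using q0_ge_3 by simp
    then show ?thesis using False by (simp add: \<rho>_def reduced_monomial_def single_coeff_def)
  qed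
  have "coeff_mult (L_basis D1) (L_basis D2) f g \<rho> = f a0 * g b0 * reduced_monomial (exp_add a0 b0) \<rho>"
    unfolding coeff_mult_def
  proof (rule sum_sum_single[OF finite_L_basis finite_L_basis a0M b0M])
    fix a b assume ab: "a \<in> L_basis D1" "b \<in> L_basis D2" "(a, b) \<noteq> (a0, b0)"
    show "f a * g b * reduced_monomial (exp_add a b) \<rho> = 0"
    proof (rule ccontr)
      assume nz: "f a * g b * reduced_monomial (exp_add a b) \<rho> \<noteq> 0"
      then have fa: "f a \<noteq> 0" and gb: "g b \<noteq> 0" and r: "reduced_monomial (exp_add a b) \<rho> \<noteq> 0" by auto
      have "pole_order a + pole_order b < pole_order a0 + pole_order b0"
      proof -
        have "pole_order a \<le> pole_order a0" "pole_order b \<le> pole_order b0" using a0(2)[OF fa] b0(2)[OF gb] .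
        moreover have "\<not> (pole_order a = pole_order a0 \<and> pole_order b = pole_order b0)" using a0(3)[OF fa] b0(3)[OF gb] ab(3) by auto
        ultimately show ?thesis by linarith
      qed
      moreover have "snd (exp_add a b) < 2 * \<alpha>" using ab by (simp add: exp_add_def L_basis_def)
      then have "reduced_monomial (exp_add a b) \<in> supported_in (L_basis (pole_order (exp_add a b)))" by (rule reduced_monomial_supported)
      then have "\<rho> \<in> L_basis (pole_order (exp_add a b))" using r unfolding supported_in_def by blast
      then have "pole_order \<rho> \<le> pole_order a + pole_order b" by (simp add: L_basis_def pole_order_exp_add)
      ultimately show False using wr by (simp add: t_def pole_order_exp_add)
    qed
  qed
  also have "\<dots> \<noteq> 0" using a0(1) b0(1) rt by (simp add: t_def)
  finally show ?thesis by (metis)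
qed

end

context odd_square_field
begin

definition interp_degree :: nat where "interp_degree = \<alpha> * (q - 1) + q0 * (\<alpha> - 1)"

lemma poly_product_coeffs:
  fixes A B :: "'a poly"
  assumes A: "degree A \<le> q - 1" and B: "degree B \<le> \<alpha> - 1"
  defines "L \<equiv> \<lambda>z. coeff A (fst z) * coeff B (snd z)"
  shows "L \<in> supported_in (L_basis interp_degree)"
    and "eval_coeffs (L_basis interp_degree) L P = poly A (fst P) * poly B (snd P)"
proof -
  define Bx where "Bx = {..q - 1} \<times> {..\<alpha> - 1}"
  have LBx: "L \<in> supported_in Bx"
  proof -
    have "L z = 0" if "z \<notin> Bx" for z
    proof -
      have "fst z > q - 1 \<or> snd z > \<alpha> - 1" using that unfolding Bx_def by (cases z) auto
      then have "coeff A (fst z) = 0 \<or> coeff B (snd z) = 0" using A B by (auto intro!: coeff_eq_0)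
      then show ?thesis by (auto simp: L_def)
    qed
    then show ?thesis by (simp add: supported_in_def)
  qed
  have BxM: "Bx \<subseteq> L_basis interp_degree"
  proof
    fix z assume "z \<in> Bx"
    then have z: "fst z \<le> q - 1" "snd z \<le> \<alpha> - 1" by (auto simp: Bx_def)
    have "\<alpha> * fst z + q0 * snd z \<le> interp_degree" unfolding interp_degree_def
      using z by (intro add_mono mult_left_mono) auto
    then show "z \<in> L_basis interp_degree" using z alpha_ge_2 by (simp add: L_basis_def pole_order_def)
  qed
  show "L \<in> supported_in (L_basis interp_degree)" using LBx BxM supported_in_mono by blast
  have "eval_coeffs (L_basis interp_degree) L P = eval_coeffs Bx L P"
    by (rule eval_coeffs_superset[OF finite_L_basis BxM LBx])
  also have "\<dots> = (\<Sum>i\<le>q - 1. \<Sum>j\<le>\<alpha> - 1. coeff A i * fst P ^ i * (coeff B j * snd P ^ j))"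
    unfolding eval_coeffs_def Bx_def L_def by (simp add: sum.cartesian_product algebra_simps split_def)
  also have "\<dots> = (\<Sum>i\<le>q - 1. coeff A i * fst P ^ i) * (\<Sum>j\<le>\<alpha> - 1. coeff B j * snd P ^ j)"
    by (simp add: sum_product)
  also have "\<dots> = poly A (fst P) * poly B (snd P)"
    using poly_eq_sum_atMost[OF A] poly_eq_sum_atMost[OF B] by simp
  finally show "eval_coeffs (L_basis interp_degree) L P = poly A (fst P) * poly B (snd P)" .
qed

text \<open>The product of the indicator polynomial of x0 in x and a Lagrange polynomial in y
  separating y0 from the other points above x0.\<close>

lemma exists_interpolator:
  assumes P0: "P0 \<in> curve_points"
  shows "\<exists>L. L \<in> supported_in (L_basis interp_degree) \<and>
    (\<forall>P\<in>curve_points. eval_coeffs (L_basis interp_degree) L P = (if P = P0 then 1 else 0))"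
proof -
  obtain x0 y0 where xy: "P0 = (x0, y0)" by (cases P0)
  obtain A :: "'a poly" where A: "degree A \<le> q - 1" "\<And>x. poly A x = (if x = x0 then 1 else 0)"
    using exists_poly_indicator[of x0] card_F by auto
  define Y where "Y = {y::'a. y ^ \<alpha> = Tr x0}"
  have y0Y: "y0 \<in> Y" using P0 xy by (simp add: Y_def curve_points_def)
  have cY: "card Y \<le> \<alpha>" unfolding Y_def by (rule card_roots_power_eq) (use alpha_ge_2 in simp)
  obtain B :: "'a poly" where B: "degree B \<le> card Y - 1" "poly B y0 = 1" "\<And>y. y \<in> Y - {y0} \<Longrightarrow> poly B y = 0"
    using exists_poly_vanishing_except[OF _ y0Y] by auto
  have degB: "degree B \<le> \<alpha> - 1" using B(1) cY by simp
  define L where "L = (\<lambda>z. coeff A (fst z) * coeff B (snd z))"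
  have "eval_coeffs (L_basis interp_degree) L P = (if P = P0 then 1 else 0)" if P: "P \<in> curve_points" for P
  proof -
    obtain x y where P': "P = (x, y)" by (cases P)
    have "x = x0 \<Longrightarrow> y \<in> Y" using P P' by (simp add: curve_points_def Y_def)
    then show ?thesis unfolding L_def poly_product_coeffs(2)[OF A(1) degB]
      using P' xy A(2) B(2,3) by auto
  qed
  then show ?thesis using poly_product_coeffs(1)[OF A(1) degB] unfolding L_def by blast
qed

definition interpolator :: "'a \<times> 'a \<Rightarrow> nat \<times> nat \<Rightarrow> 'a" where
  "interpolator P0 = (SOME L. L \<in> supported_in (L_basis interp_degree) \<and>
    (\<forall>P\<in>curve_points. eval_coeffs (L_basis interp_degree) L P = (if P = P0 then 1 else 0)))"

lemma interpolator:
  assumes "P0 \<in> curve_points"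
  shows "interpolator P0 \<in> supported_in (L_basis interp_degree)"
    and "P \<in> curve_points \<Longrightarrow> eval_coeffs (L_basis interp_degree) (interpolator P0) P = (if P = P0 then 1 else 0)"
  using someI_ex[OF exists_interpolator[OF assms]] by (auto simp: interpolator_def)

definition mult_plus_interpolators ::
    "nat \<Rightarrow> (nat \<times> nat \<Rightarrow> 'a) \<Rightarrow> ('a \<times> 'a) set \<Rightarrow> (nat \<times> nat \<Rightarrow> 'a) \<times> ('a \<times> 'a \<Rightarrow> 'a) \<Rightarrow> nat \<times> nat \<Rightarrow> 'a"
  where "mult_plus_interpolators W f Z = (\<lambda>(g, v) w.
    coeff_mult (L_basis W) (L_basis interp_degree) f g w + (\<Sum>P\<in>Z. v P * interpolator P w))"

lemma mult_plus_interpolators_supported: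
  assumes f: "f \<in> supported_in (L_basis W)" and Z: "Z \<subseteq> curve_points"
    and g: "g \<in> supported_in (L_basis interp_degree)"
  shows "mult_plus_interpolators W f Z (g, v) \<in> supported_in (L_basis (W + interp_degree))"
proof -
  have "interpolator P \<in> supported_in (L_basis (W + interp_degree))" if "P \<in> Z" for P
    using interpolator(1)[of P] that Z supported_in_mono[OF L_basis_mono[of interp_degree "W + interp_degree"]]
    by auto
  then have "(\<lambda>w. \<Sum>P\<in>Z. v P * interpolator P w) \<in> supported_in (L_basis (W + interp_degree))"
    by (intro supported_in_sum) (auto simp: supported_in_def)
  then show ?thesis using coeff_mult_supported[OF f g]
    by (auto simp: mult_plus_interpolators_def supported_in_def)
qed

lemma eval_mult_plus_interpolators:
  assumes f: "f \<in> supported_in (L_basis W)" and Z: "Z \<subseteq> curve_points"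
    and vz: "\<And>P. P \<in> Z \<Longrightarrow> eval_coeffs (L_basis W) f P = 0"
    and g: "g \<in> supported_in (L_basis interp_degree)" and P: "P \<in> Z"
  shows "eval_coeffs (L_basis (W + interp_degree)) (mult_plus_interpolators W f Z (g, v)) P = v P"
proof -
  let ?D = "W + interp_degree"
  have PP: "P \<in> curve_points" using P Z by auto
  have "eval_coeffs (L_basis ?D) (mult_plus_interpolators W f Z (g, v)) P
      = eval_coeffs (L_basis ?D) (coeff_mult (L_basis W) (L_basis interp_degree) f g) P
        + (\<Sum>P'\<in>Z. v P' * eval_coeffs (L_basis ?D) (interpolator P') P)"
    by (simp add: mult_plus_interpolators_def eval_coeffs_add eval_coeffs_sum eval_coeffs_smult)
  also have "eval_coeffs (L_basis ?D) (coeff_mult (L_basis W) (L_basis interp_degree) f g) P = 0"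
    using eval_coeff_mult[OF PP f g] vz[OF P] by simp
  also have "(\<Sum>P'\<in>Z. v P' * eval_coeffs (L_basis ?D) (interpolator P') P) = (\<Sum>P'\<in>Z. if P' = P then v P' else 0)"
  proof (rule sum.cong[OF refl])
    fix P' assume P': "P' \<in> Z"
    have "eval_coeffs (L_basis ?D) (interpolator P') P = eval_coeffs (L_basis interp_degree) (interpolator P') P"
      using interpolator(1)[of P'] P' Z by (intro eval_coeffs_superset finite_L_basis L_basis_mono) auto
    then show "v P' * eval_coeffs (L_basis ?D) (interpolator P') P = (if P' = P then v P' else 0)"
      using interpolator(2)[of P' P] P' Z PP by auto
  qed
  finally show ?thesis using P by (simp add: sum.delta)
qed

text \<open>The dimension count behind the zero bound: g \<mapsto> f g is injective on L(interp_degree),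
  and adding interpolators at the zeros of f realizes every prescription of values there.\<close>

lemma inj_on_mult_plus_interpolators:
  assumes f: "f \<in> supported_in (L_basis W)" and f0: "f \<noteq> (\<lambda>w. 0)" and Z: "Z \<subseteq> curve_points"
    and vz: "\<And>P. P \<in> Z \<Longrightarrow> eval_coeffs (L_basis W) f P = 0"
  shows "inj_on (mult_plus_interpolators W f Z) (supported_in (L_basis interp_degree) \<times> (Z \<rightarrow>\<^sub>E UNIV))"
proof (rule inj_onI, clarify)
  fix g g' :: "nat \<times> nat \<Rightarrow> 'a" and v v'
  assume g: "g \<in> supported_in (L_basis interp_degree)" and v: "v \<in> Z \<rightarrow>\<^sub>E UNIV"
    and g': "g' \<in> supported_in (L_basis interp_degree)" and v': "v' \<in> Z \<rightarrow>\<^sub>E UNIV"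
    and e: "mult_plus_interpolators W f Z (g, v) = mult_plus_interpolators W f Z (g', v')"
  have vv: "v = v'"
    by (rule PiE_ext[OF v v'])
      (use eval_mult_plus_interpolators[OF f Z vz g, of _ v] eval_mult_plus_interpolators[OF f Z vz g', of _ v'] e
        in simp)
  have "coeff_mult (L_basis W) (L_basis interp_degree) f g = coeff_mult (L_basis W) (L_basis interp_degree) f g'"
    using e unfolding vv by (simp add: mult_plus_interpolators_def fun_eq_iff)
  then have "coeff_mult (L_basis W) (L_basis interp_degree) f (\<lambda>w. g w - g' w) = (\<lambda>w. 0)"
    by (simp add: coeff_mult_diff)
  moreover have "(\<lambda>w. g w - g' w) \<in> supported_in (L_basis interp_degree)"
    using g g' by (auto simp: supported_in_def)
  ultimately have "(\<lambda>w. g w - g' w) = (\<lambda>w. 0)" using coeff_mult_nonzero[OF f _ f0] by blast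
  then show "g = g' \<and> v = v'" using vv by (simp add: fun_eq_iff)
qed

lemma card_zeros_le:
  assumes f: "f \<in> supported_in (L_basis W)" and f0: "f \<noteq> (\<lambda>w. 0)" and Z: "Z \<subseteq> curve_points"
    and vz: "\<And>P. P \<in> Z \<Longrightarrow> eval_coeffs (L_basis W) f P = 0"
  shows "card Z \<le> W"
proof -
  let ?Dom = "(supported_in (L_basis interp_degree) :: (nat \<times> nat \<Rightarrow> 'a) set) \<times> (Z \<rightarrow>\<^sub>E (UNIV::'a set))"
  let ?D = "W + interp_degree"
  have "card ?Dom \<le> card (supported_in (L_basis ?D) :: (nat \<times> nat \<Rightarrow> 'a) set)"
    using mult_plus_interpolators_supported[OF f Z]
    by (intro card_inj_on_le[OF inj_on_mult_plus_interpolators[OF f f0 Z vz]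
          _ finite_supported_in[OF finite_L_basis]]) auto
  moreover have "card ?Dom = q ^ card (L_basis interp_degree) * q ^ card Z"
    using card_supported_in[OF finite_L_basis, of interp_degree, where 'b='a] card_F
      card_funcsetE[of Z "UNIV::'a set"] by (simp add: card_cartesian_product)
  moreover have "card (supported_in (L_basis ?D) :: (nat \<times> nat \<Rightarrow> 'a) set) = q ^ card (L_basis ?D)"
    using card_supported_in[OF finite_L_basis, of ?D, where 'b='a] card_F by simp
  ultimately have "q ^ (card (L_basis interp_degree) + card Z) \<le> q ^ card (L_basis ?D)"
    by (simp add: power_add)
  also have "\<dots> \<le> q ^ (card (L_basis interp_degree) + W)"
    using card_L_basis_le_add[of interp_degree ?D] q_ge_9 by (intro power_increasing) auto
  finally have "card (L_basis interp_degree) + card Z \<le> card (L_basis interp_degree) + W"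
    by (rule power_le_imp_le_exp[rotated]) (use q_ge_9 in simp)
  then show ?thesis by simp
qed

end

section \<open>Rational points and weighted orthogonality\<close>

context odd_square_field
begin

definition fibre :: "'a \<Rightarrow> 'a set" where "fibre x = {y. y ^ \<alpha> = Tr x}"

lemma curve_points_Sigma: "curve_points = (SIGMA x:UNIV. fibre x)"
  by (auto simp: curve_points_def fibre_def)

lemma fibre_Tr_zero: "Tr x = 0 \<Longrightarrow> fibre x = {0}"
  using alpha_ge_2 by (auto simp: fibre_def)

lemma card_fibre: "Tr x \<noteq> 0 \<Longrightarrow> card (fibre x) = \<alpha>"
  unfolding fibre_def by (rule card_alpha_roots[OF Tr_in_Fq0])

definition npoints :: nat where "npoints = q0 + (q - q0) * \<alpha>"

lemma card_curve_points: "card curve_points = npoints"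
proof -
  have "card curve_points = (\<Sum>x\<in>UNIV. card (fibre x))" unfolding curve_points_Sigma by (simp add: card_SigmaI)
  also have "\<dots> = (\<Sum>x\<in>UNIV. if Tr x = 0 then 1 else \<alpha>)"
    by (intro sum.cong refl) (simp add: fibre_Tr_zero card_fibre)
  also have "\<dots> = card Tr_kernel + card (UNIV - Tr_kernel) * \<alpha>"
    by (simp add: sum.If_cases Tr_kernel_def Collect_neg_eq Compl_eq_Diff_UNIV)
  also have "card (UNIV - Tr_kernel) = q - q0" using card_Tr_kernel card_F by (simp add: card_Diff_subset)
  finally show ?thesis using card_Tr_kernel by (simp add: npoints_def)
qed

lemma two_alpha: "(2 * of_nat \<alpha> :: 'a) = 1"
proof -
  have "2 * \<alpha> = q0 + 1" using q0_eq_alpha alpha_ge_2 by simp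
  then have "(of_nat (2 * \<alpha>) :: 'a) = of_nat q0 + 1" by simp
  then show ?thesis using of_nat_q0 by simp
qed

text \<open>The weights are the residues of -2 dx / (x^q - x) at the affine points: x - x_P vanishes
  to order \<alpha> at the points with y = 0 and to order 1 at the others, and 2\<alpha> = 1.\<close>

definition weight :: "'a \<times> 'a \<Rightarrow> 'a" where "weight P = (if snd P = 0 then 1 else 2)"

lemma weight_nonzero: "weight P \<noteq> 0" using two_neq_zero by (simp add: weight_def)

lemma sum_fibre_power:
  assumes t: "Tr x \<noteq> 0" and J: "J < 2 * \<alpha>"
  shows "(\<Sum>y\<in>fibre x. y ^ J) = (if J = 0 then of_nat \<alpha> else if J = \<alpha> then of_nat \<alpha> * Tr x else 0)"
proof -
  have tT: "Tr x \<in> Fq0" by (rule Tr_in_Fq0)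
  consider "J = 0" | "0 < J \<and> J < \<alpha>" | "J = \<alpha>" | "\<alpha> < J" by linarith
  then show ?thesis
  proof cases
    case 1 then show ?thesis using card_fibre[OF t] by simp
  next
    case 2 then show ?thesis using sum_alpha_roots_power[OF tT t, of J] by (simp add: fibre_def)
  next
    case 3
    have "(\<Sum>y\<in>fibre x. y ^ J) = (\<Sum>y\<in>fibre x. Tr x)" using 3 by (intro sum.cong) (auto simp: fibre_def)
    then show ?thesis using 3 card_fibre[OF t] alpha_ge_2 by simp
  next
    case 4
    have "(\<Sum>y\<in>fibre x. y ^ J) = (\<Sum>y\<in>fibre x. Tr x * y ^ (J - \<alpha>))"
    proof (intro sum.cong refl)
      fix y assume "y \<in> fibre x"
      then have "y ^ \<alpha> = Tr x" by (simp add: fibre_def)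
      moreover have "y ^ J = y ^ \<alpha> * y ^ (J - \<alpha>)" using 4 by (simp add: power_add[symmetric])
      ultimately show "y ^ J = Tr x * y ^ (J - \<alpha>)" by simp
    qed
    also have "\<dots> = Tr x * (\<Sum>y\<in>fibre x. y ^ (J - \<alpha>))" by (simp add: sum_distrib_left)
    also have "(\<Sum>y\<in>fibre x. y ^ (J - \<alpha>)) = 0" using sum_alpha_roots_power[OF tT t, of "J - \<alpha>"] 4 J by (simp add: fibre_def)
    finally show ?thesis using 4 alpha_ge_2 by simp
  qed
qed

lemma sum_fibre_weighted_power:
  assumes J: "J < 2 * \<alpha>"
  shows "(\<Sum>y\<in>fibre x. weight (x, y) * y ^ J) = (if J = 0 then 1 else if J = \<alpha> then Tr x else 0)"
proof (cases "Tr x = 0")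
  case True
  then show ?thesis using alpha_ge_2 by (simp add: fibre_Tr_zero weight_def)
next
  case False
  have "(\<Sum>y\<in>fibre x. weight (x, y) * y ^ J) = (\<Sum>y\<in>fibre x. 2 * y ^ J)"
  proof (intro sum.cong refl)
    fix y assume "y \<in> fibre x"
    then have "y \<noteq> 0" using False alpha_ge_2 by (auto simp: fibre_def power_0_left)
    then show "weight (x, y) * y ^ J = 2 * y ^ J" by (simp add: weight_def)
  qed
  also have "\<dots> = 2 * (\<Sum>y\<in>fibre x. y ^ J)" by (simp add: sum_distrib_left)
  also have "\<dots> = (if J = 0 then 1 else if J = \<alpha> then Tr x else 0)"
    using sum_fibre_power[OF False J] two_alpha by (simp add: mult.assoc[symmetric])
  finally show ?thesis .
qed

lemma weighted_sum_monomial: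
  assumes J: "J < 2 * \<alpha>" and W: "\<alpha> * I + q0 * J < \<alpha> * (q - 1)"
  shows "(\<Sum>P\<in>curve_points. weight P * fst P ^ I * snd P ^ J) = 0"
proof -
  have "(\<Sum>x\<in>UNIV. \<Sum>y\<in>fibre x. weight (x, y) * x ^ I * y ^ J) = (\<Sum>(x,y)\<in>Sigma UNIV fibre. weight (x, y) * x ^ I * y ^ J)"
    by (rule sum.Sigma) auto
  then have "(\<Sum>P\<in>curve_points. weight P * fst P ^ I * snd P ^ J) = (\<Sum>x\<in>UNIV. \<Sum>y\<in>fibre x. weight (x, y) * x ^ I * y ^ J)"
    unfolding curve_points_Sigma by (simp add: split_def)
  also have "\<dots> = (\<Sum>x\<in>UNIV. x ^ I * (\<Sum>y\<in>fibre x. weight (x, y) * y ^ J))"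
    by (simp add: sum_distrib_left algebra_simps)
  also have "\<dots> = (\<Sum>x\<in>UNIV. x ^ I * (if J = 0 then 1 else if J = \<alpha> then Tr x else 0))"
    using sum_fibre_weighted_power[OF J] by simp
  also have "\<dots> = 0"
  proof -
    consider "J = 0" | "J = \<alpha>" | "J \<noteq> 0 \<and> J \<noteq> \<alpha>" by blast
    then show ?thesis
    proof cases
      case 1
      have "I < q - 1" using W 1 by simp
      then show ?thesis using 1 sum_power_eq_0 by simp
    next
      case 2
      have "\<alpha> * (I + q0) < \<alpha> * (q - 1)" using W 2 by (simp add: algebra_simps)
      then have lt: "I + q0 < q - 1" by simp
      have z1: "(\<Sum>x\<in>(UNIV::'a set). x ^ (I + q0)) = 0" by (rule sum_power_eq_0) (use lt in simp)
      have z2: "(\<Sum>x\<in>(UNIV::'a set). x ^ (I + 1)) = 0" by (rule sum_power_eq_0) (use lt q0_ge_3 in simp)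
      have "(\<Sum>x\<in>UNIV. x ^ I * (if J = 0 then 1 else if J = \<alpha> then Tr x else 0))
          = (\<Sum>x\<in>(UNIV::'a set). x ^ (I + q0) + x ^ (I + 1))"
        using 2 alpha_ge_2 by (intro sum.cong refl) (simp add: Tr_def algebra_simps power_add)
      also have "\<dots> = 0" by (simp only: sum.distrib z1 z2) simp
      finally show ?thesis .
    next
      case 3 then show ?thesis by simp
    qed
  qed
  finally show ?thesis .
qed

lemma weighted_sum_eval_product:
  assumes f: "f \<in> supported_in (L_basis m1)" and g: "g \<in> supported_in (L_basis m2)" and W: "m1 + m2 < \<alpha> * (q - 1)"
  shows "(\<Sum>P\<in>curve_points. weight P * (eval_coeffs (L_basis m1) f P * eval_coeffs (L_basis m2) g P)) = 0"
proof -
  have "(\<Sum>P\<in>curve_points. weight P * (eval_coeffs (L_basis m1) f P * eval_coeffs (L_basis m2) g P))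
      = (\<Sum>P\<in>curve_points. \<Sum>a\<in>L_basis m1. \<Sum>b\<in>L_basis m2. f a * g b * (weight P * fst P ^ (fst a + fst b) * snd P ^ (snd a + snd b)))"
  proof (rule sum.cong[OF refl])
    fix P
    have "eval_coeffs (L_basis m1) f P * eval_coeffs (L_basis m2) g P = (\<Sum>a\<in>L_basis m1. \<Sum>b\<in>L_basis m2. (f a * fst P ^ fst a * snd P ^ snd a) * (g b * fst P ^ fst b * snd P ^ snd b))"
      unfolding eval_coeffs_def by (rule sum_product)
    then have "weight P * (eval_coeffs (L_basis m1) f P * eval_coeffs (L_basis m2) g P) = (\<Sum>a\<in>L_basis m1. \<Sum>b\<in>L_basis m2. weight P * ((f a * fst P ^ fst a * snd P ^ snd a) * (g b * fst P ^ fst b * snd P ^ snd b)))"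
      by (simp add: sum_distrib_left)
    also have "\<dots> = (\<Sum>a\<in>L_basis m1. \<Sum>b\<in>L_basis m2. f a * g b * (weight P * fst P ^ (fst a + fst b) * snd P ^ (snd a + snd b)))"
      by (intro sum.cong refl) (simp add: power_add algebra_simps)
    finally show "weight P * (eval_coeffs (L_basis m1) f P * eval_coeffs (L_basis m2) g P) = (\<Sum>a\<in>L_basis m1. \<Sum>b\<in>L_basis m2. f a * g b * (weight P * fst P ^ (fst a + fst b) * snd P ^ (snd a + snd b)))" .
  qed
  also have "\<dots> = (\<Sum>a\<in>L_basis m1. \<Sum>b\<in>L_basis m2. f a * g b * (\<Sum>P\<in>curve_points. weight P * fst P ^ (fst a + fst b) * snd P ^ (snd a + snd b)))"
    by (simp add: sum.swap[of _ curve_points] sum_distrib_left)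
  also have "\<dots> = 0"
  proof (intro sum.neutral ballI)
    fix a b assume a: "a \<in> L_basis m1" and b: "b \<in> L_basis m2"
    have J: "snd a + snd b < 2 * \<alpha>" using a b by (simp add: L_basis_def)
    have "\<alpha> * (fst a + fst b) + q0 * (snd a + snd b) = pole_order a + pole_order b" by (simp add: pole_order_def algebra_simps)
    also have "\<dots> \<le> m1 + m2" using a b by (simp add: L_basis_def add_mono)
    finally have "\<alpha> * (fst a + fst b) + q0 * (snd a + snd b) < \<alpha> * (q - 1)" using W by simp
    then show "f a * g b * (\<Sum>P\<in>curve_points. weight P * fst P ^ (fst a + fst b) * snd P ^ (snd a + snd b)) = 0"
      using weighted_sum_monomial[OF J] by simp
  qed
  finally show ?thesis .
qed

lemma q0_odd_param:
  "\<exists>k. q0 = 2*k+1 \<and> \<alpha> = k+1 \<and> genus = k^2 \<and> q = 4*k^2+4*k+1 \<and> npoints = 4*k^3+6*k^2+4*k+1"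
proof -
  obtain k where k: "q0 = 2*k+1" "\<alpha> = k+1" using q0_eq_odd by blast
  have q: "q = 4*k^2+4*k+1" using k(1) by (simp add: power2_eq_square algebra_simps)
  then have "q - q0 = 4*k^2+2*k" using k(1) by simp
  have "npoints = q0 + (q - q0) * \<alpha>" by (simp add: npoints_def)
  also have "\<dots> = (2*k+1) + (4*k^2+2*k) * (k+1)"
    by (subst \<open>q - q0 = 4*k^2+2*k\<close>, subst k(2)) (simp add: k(1))
  finally have "npoints = 4*k^3+6*k^2+4*k+1" by (simp add: power2_eq_square power3_eq_cube algebra_simps)
  moreover have "genus = k^2" using k(2) by (simp add: genus_def)
  ultimately show ?thesis using k q by blast
qed

lemma alpha_q_minus_1: "\<alpha> * (q - 1) = npoints + 2 * genus - 1"
proof -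
  obtain k where k: "q0 = 2*k+1" "\<alpha> = k+1" "genus = k^2" "q = 4*k^2+4*k+1" "npoints = 4*k^3+6*k^2+4*k+1"
    using q0_odd_param by blast
  show ?thesis using k by (simp add: power2_eq_square power3_eq_cube algebra_simps)
qed

lemma two_npoints: "2 * npoints = q0 * (q0^2 + 1)"
proof -
  obtain k where k: "q0 = 2*k+1" "\<alpha> = k+1" "genus = k^2" "q = 4*k^2+4*k+1" "npoints = 4*k^3+6*k^2+4*k+1"
    using q0_odd_param by blast
  show ?thesis using k by (simp add: power2_eq_square power3_eq_cube algebra_simps)
qed

lemma four_genus: "4 * genus = (q0 - 1)^2"
proof -
  obtain k where k: "q0 = 2*k+1" "\<alpha> = k+1" "genus = k^2" "q = 4*k^2+4*k+1" "npoints = 4*k^3+6*k^2+4*k+1"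
    using q0_odd_param by blast
  show ?thesis using k by (simp add: power2_eq_square algebra_simps)
qed

lemma int_npoints: "int npoints = int q0 * (int q0 ^ 2 + 1) div 2"
proof -
  have "int (2 * npoints) = int (q0 * (q0^2 + 1))" using two_npoints by simp
  then have "int q0 * (int q0 ^ 2 + 1) = 2 * int npoints" by (simp add: algebra_simps)
  then show ?thesis by simp
qed

lemma int_genus_q0: "int genus = (int q0 - 1) ^ 2 div 4"
proof -
  have "int (4 * genus) = int ((q0 - 1)^2)" using four_genus by simp
  then show ?thesis using q0_ge_3 by (simp add: of_nat_diff)
qed

lemma alpha_le_genus: "\<alpha> \<le> 2 * genus" and alpha_cases: "\<alpha> = 2 \<or> \<alpha> + 1 \<le> 2 * genus"
proof -
  obtain k where k: "q0 = 2*k+1" "\<alpha> = k+1" "genus = k^2" using q0_odd_param by blast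
  have a: "\<alpha> = k + 1" and g: "genus = k * k" using k(2,3) by (simp_all add: power2_eq_square)
  have k1: "k \<ge> 1" using alpha_ge_2 a by linarith
  have "\<alpha> \<le> 2 * genus \<and> (\<alpha> = 2 \<or> \<alpha> + 1 \<le> 2 * genus)"
  proof (cases "k = 1")
    case True then show ?thesis using a g by simp
  next
    case False
    then have "k \<ge> 2" using k1 by simp
    then have "2 * k \<le> k * k" by simp
    then have "\<alpha> + 1 \<le> 2 * genus" using a g k1 by linarith
    then show ?thesis by simp
  qed
  then show "\<alpha> \<le> 2 * genus" "\<alpha> = 2 \<or> \<alpha> + 1 \<le> 2 * genus" by auto
qed

lemma npoints_ge_15: "npoints \<ge> 15"
proof -
  obtain k where k: "q0 = 2*k+1" "\<alpha> = k+1" "genus = k^2" "q = 4*k^2+4*k+1" "npoints = 4*k^3+6*k^2+4*k+1"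
    using q0_odd_param by blast
  have "k \<ge> 1" using alpha_ge_2 k by linarith
  then have "k^3 \<ge> 1" "k^2 \<ge> 1" by simp_all
  then show ?thesis using k \<open>k \<ge> 1\<close> by linarith
qed

lemma origin_curve_point: "(0, 0) \<in> curve_points"
  using alpha_ge_2 q0_ge_3 by (simp add: curve_points_def Tr_def zero_power)

lemma curve_point_x_zero: "P \<in> curve_points \<Longrightarrow> fst P = 0 \<Longrightarrow> P = (0, 0)"
proof -
  assume P: "P \<in> curve_points" "fst P = 0"
  have "Tr 0 = 0" using q0_ge_3 by (simp add: Tr_def zero_power)
  then have "snd P ^ \<alpha> = 0" using P by (simp add: curve_points_def)
  then have "snd P = 0" by simp
  then show ?thesis using P by (cases P) simp
qed

lemma eval_coeffs_origin: "(0,0) \<in> M \<Longrightarrow> finite M \<Longrightarrow> eval_coeffs M g (0, 0) = g (0, 0)"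
proof -
  assume z: "(0,0) \<in> M" "finite M"
  have "eval_coeffs M g (0, 0) = (\<Sum>w\<in>M. if w = (0,0) then g w else 0)"
    unfolding eval_coeffs_def by (intro sum.cong refl) (auto simp: zero_power)
  also have "\<dots> = g (0,0)" using z by (simp add: sum.delta)
  finally show ?thesis .
qed

end

section \<open>The codes\<close>

text \<open>The code has degree
  deg_C = 2r + 1 + g, hence dimension 2r + 2; its dual is the weighted code of degree
  deg_D = s + 2g - 2 - deg_C restricted to functions vanishing at the origin.\<close>

locale hull_code = odd_square_field +
  fixes r :: int
  assumes r1: "int genus - 2 \<le> 2 * r" and r2: "2 * r \<le> int npoints - int genus - 3"
begin

definition code_len :: nat where "code_len = npoints - 1"
definition deg_C :: nat where "deg_C = nat (2 * r + 1 + int genus)"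
definition deg_D :: nat where "deg_D = nat (int npoints + int genus - 3 - 2 * r)"
definition eval_points :: "('a \<times> 'a) set" where "eval_points = curve_points - {(0, 0)}"

lemma genus_pos: "genus \<ge> 1" using alpha_ge_2 by (simp add: genus_def)

lemma int_deg_C: "int deg_C = 2 * r + 1 + int genus" using r1 genus_pos by (simp add: deg_C_def)
lemma int_deg_D: "int deg_D = int npoints + int genus - 3 - 2 * r" using r2 genus_pos by (simp add: deg_D_def)

lemma deg_C_D_less: "deg_C + deg_D < \<alpha> * (q - 1)"
proof -
  have "int (deg_C + deg_D) = int npoints + 2 * int genus - 2" using int_deg_C int_deg_D by simp
  moreover have "int (\<alpha> * (q - 1)) = int npoints + 2 * int genus - 1" using alpha_q_minus_1 npoints_ge_15 by simp
  ultimately show ?thesis by linarith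
qed

lemma deg_C_ge: "2 * genus \<le> deg_C + 1" using int_deg_C r1 by linarith
lemma deg_D_ge: "2 * genus \<le> deg_D" using int_deg_D r2 by linarith
lemma deg_C_le: "deg_C + 2 \<le> npoints" using int_deg_C r2 by linarith
lemma deg_D_le: "deg_D + 1 \<le> npoints" using int_deg_D r1 by linarith

lemma alpha_le_deg_C: "\<alpha> \<le> deg_C"
proof (cases "\<alpha> = 2")
  case True
  then have "genus = 1" by (simp add: genus_def)
  then have "r \<ge> 0" using r1 by linarith
  then show ?thesis using int_deg_C True \<open>genus = 1\<close> by linarith
next
  case False
  then have "\<alpha> + 1 \<le> 2 * genus" using alpha_cases by simp
  then show ?thesis using deg_C_ge by linarith
qed

lemma alpha_le_deg_D: "\<alpha> \<le> deg_D" using deg_D_ge alpha_le_genus by linarith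

lemma card_L_basis_deg_C: "card (L_basis deg_C) = nat (2 * r + 2)"
proof -
  have "card (L_basis deg_C) = deg_C + 1 - genus" using deg_C_ge by (intro card_L_basis) simp
  then show ?thesis using int_deg_C by simp
qed

lemma card_L_basis_deg_D: "card (L_basis deg_D) = deg_D + 1 - genus"
  using deg_D_ge by (intro card_L_basis) simp

lemma card_eval_points: "card eval_points = code_len"
  using card_curve_points origin_curve_point by (simp add: eval_points_def code_len_def card_Diff_singleton)

definition point_enum :: "nat \<Rightarrow> 'a \<times> 'a" where "point_enum = (SOME e. bij_betw e {..<code_len} eval_points)"

lemma bij_point_enum: "bij_betw point_enum {..<code_len} eval_points"
proof -
  have "\<exists>e. bij_betw e {0..<card eval_points} eval_points" by (rule ex_bij_betw_nat_finite) simp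
  then have "\<exists>e. bij_betw e {..<code_len} eval_points" using card_eval_points by (simp add: atLeast0LessThan)
  then show ?thesis unfolding point_enum_def by (rule someI_ex)
qed

definition eval_vec :: "('a \<times> 'a \<Rightarrow> 'a) \<Rightarrow> nat \<Rightarrow> 'a" where
  "eval_vec h = (\<lambda>i. if i < code_len then h (point_enum i) else 0)"

lemma eval_vec_vecs: "eval_vec h \<in> vecs code_len" by (simp add: eval_vec_def vecs_def)

lemma sum_eval_vec: "(\<Sum>i<code_len. eval_vec h1 i * eval_vec h2 i) = (\<Sum>P\<in>eval_points. h1 P * h2 P)"
proof -
  have "(\<Sum>i<code_len. eval_vec h1 i * eval_vec h2 i) = (\<Sum>i<code_len. h1 (point_enum i) * h2 (point_enum i))" by (simp add: eval_vec_def)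
  also have "\<dots> = (\<Sum>P\<in>eval_points. h1 P * h2 P)" by (rule sum.reindex_bij_betw[OF bij_point_enum])
  finally show ?thesis .
qed

lemma hamming_dist_eval_vec:
  "hamming_dist code_len (eval_vec h1) (eval_vec h2) = card {P \<in> eval_points. h1 P \<noteq> h2 P}"
proof -
  have "{i. i < code_len \<and> eval_vec h1 i \<noteq> eval_vec h2 i}
      = {i \<in> {..<code_len}. h1 (point_enum i) \<noteq> h2 (point_enum i)}"
    by (auto simp: eval_vec_def)
  moreover have "bij_betw point_enum {i \<in> {..<code_len}. h1 (point_enum i) \<noteq> h2 (point_enum i)}
      {P \<in> eval_points. h1 P \<noteq> h2 P}"
    by (rule bij_betw_Collect[OF bij_point_enum]) simp
  ultimately show ?thesis unfolding hamming_dist_def by (simp add: bij_betw_same_card)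
qed

lemma eval_vec_eq_iff: "eval_vec h1 = eval_vec h2 \<longleftrightarrow> (\<forall>P\<in>eval_points. h1 P = h2 P)"
proof -
  have "eval_vec h1 = eval_vec h2 \<longleftrightarrow> (\<forall>i<code_len. h1 (point_enum i) = h2 (point_enum i))"
    by (auto simp: eval_vec_def fun_eq_iff)
  then show ?thesis unfolding bij_betw_imp_surj_on[OF bij_point_enum, symmetric] by auto
qed

lemma hamming_dist_eval_ge:
  assumes f: "f \<in> supported_in (L_basis W)" and f': "f' \<in> supported_in (L_basis W)" and ne: "f \<noteq> f'"
  shows "code_len - W \<le> hamming_dist code_len (eval_vec (eval_coeffs (L_basis W) f)) (eval_vec (eval_coeffs (L_basis W) f'))"
proof -
  let ?h = "\<lambda>w. f w - f' w"
  have h: "?h \<in> supported_in (L_basis W)" using f f' by (auto simp: supported_in_def)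
  have h0: "?h \<noteq> (\<lambda>w. 0)" using ne by (auto simp: fun_eq_iff)
  let ?Z = "{P \<in> eval_points. eval_coeffs (L_basis W) ?h P = 0}"
  have "card ?Z \<le> W" by (rule card_zeros_le[OF h h0]) (auto simp: eval_points_def)
  have "{P \<in> eval_points. eval_coeffs (L_basis W) f P \<noteq> eval_coeffs (L_basis W) f' P} = eval_points - ?Z" by (auto simp: eval_coeffs_diff)
  then have "hamming_dist code_len (eval_vec (eval_coeffs (L_basis W) f)) (eval_vec (eval_coeffs (L_basis W) f')) = card (eval_points - ?Z)" by (simp add: hamming_dist_eval_vec)
  also have "\<dots> = code_len - card ?Z" using card_eval_points by (simp add: card_Diff_subset)
  finally show ?thesis using \<open>card ?Z \<le> W\<close> by simp
qed

definition AG_code :: "(nat \<Rightarrow> 'a) set" where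
  "AG_code = (\<lambda>f. eval_vec (eval_coeffs (L_basis deg_C) f)) ` supported_in (L_basis deg_C)"

definition dual_coeffs :: "(nat \<times> nat \<Rightarrow> 'a) set" where
  "dual_coeffs = {g \<in> supported_in (L_basis deg_D). g (0, 0) = 0}"

definition dual_AG_code :: "(nat \<Rightarrow> 'a) set" where
  "dual_AG_code = (\<lambda>g. eval_vec (\<lambda>P. weight P * eval_coeffs (L_basis deg_D) g P)) ` dual_coeffs"

lemma deg_C_less: "deg_C < code_len" using deg_C_le by (simp add: code_len_def)

lemma linear_AG_code: "linear_code code_len AG_code"
proof -
  have z: "(\<lambda>i. 0) \<in> AG_code"
  proof -
    have "(\<lambda>w. 0::'a) \<in> supported_in (L_basis deg_C)" by (simp add: supported_in_def)
    moreover have "eval_vec (eval_coeffs (L_basis deg_C) (\<lambda>w. 0)) = (\<lambda>i. 0)" by (simp add: eval_vec_def eval_coeffs_zero fun_eq_iff)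
    ultimately show ?thesis unfolding AG_code_def by (metis image_eqI)
  qed
  have a: "(\<lambda>i. x i + y i) \<in> AG_code" if xy: "x \<in> AG_code" "y \<in> AG_code" for x y
  proof -
    obtain f where f: "f \<in> supported_in (L_basis deg_C)" "x = eval_vec (eval_coeffs (L_basis deg_C) f)" using xy(1) unfolding AG_code_def by blast
    obtain f' where f': "f' \<in> supported_in (L_basis deg_C)" "y = eval_vec (eval_coeffs (L_basis deg_C) f')" using xy(2) unfolding AG_code_def by blast
    have "(\<lambda>w. f w + f' w) \<in> supported_in (L_basis deg_C)" using f f' by (auto simp: supported_in_def)
    moreover have "(\<lambda>i. x i + y i) = eval_vec (eval_coeffs (L_basis deg_C) (\<lambda>w. f w + f' w))"
      using f f' by (simp add: eval_vec_def eval_coeffs_add fun_eq_iff)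
    ultimately show ?thesis unfolding AG_code_def by blast
  qed
  have s: "sc c x \<in> AG_code" if xC: "x \<in> AG_code" for c x
  proof -
    obtain f where f: "f \<in> supported_in (L_basis deg_C)" "x = eval_vec (eval_coeffs (L_basis deg_C) f)" using xC unfolding AG_code_def by blast
    have "(\<lambda>w. c * f w) \<in> supported_in (L_basis deg_C)" using f by (auto simp: supported_in_def)
    moreover have "sc c x = eval_vec (eval_coeffs (L_basis deg_C) (\<lambda>w. c * f w))" using f by (simp add: eval_vec_def eval_coeffs_smult sc_def fun_eq_iff)
    ultimately show ?thesis unfolding AG_code_def by blast
  qed
  have "AG_code \<subseteq> vecs code_len" using eval_vec_vecs by (auto simp: AG_code_def)
  then show ?thesis using z a s by (simp add: linear_code_def)
qed

lemma inj_on_AG_code: "inj_on (\<lambda>f. eval_vec (eval_coeffs (L_basis deg_C) f)) (supported_in (L_basis deg_C))"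
proof (rule inj_onI)
  fix f f' assume f: "f \<in> supported_in (L_basis deg_C)" and f': "f' \<in> supported_in (L_basis deg_C)" and e: "eval_vec (eval_coeffs (L_basis deg_C) f) = eval_vec (eval_coeffs (L_basis deg_C) f')"
  show "f = f'"
  proof (rule ccontr)
    assume "f \<noteq> f'"
    then have "code_len - deg_C \<le> hamming_dist code_len (eval_vec (eval_coeffs (L_basis deg_C) f)) (eval_vec (eval_coeffs (L_basis deg_C) f'))" by (rule hamming_dist_eval_ge[OF f f'])
    then show False using e deg_C_less by (simp add: hamming_dist_def)
  qed
qed

lemma card_AG_code: "card AG_code = card (UNIV::'a set) ^ nat (2 * r + 2)"
proof -
  have "card AG_code = card (supported_in (L_basis deg_C) :: (nat \<times> nat \<Rightarrow> 'a) set)" unfolding AG_code_def by (rule card_image[OF inj_on_AG_code])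
  also have "\<dots> = card (UNIV::'a set) ^ card (L_basis deg_C)" by (rule card_supported_in[OF finite_L_basis])
  finally show ?thesis using card_L_basis_deg_C by simp
qed

lemma dist_AG_code: "\<forall>x\<in>AG_code. \<forall>y\<in>AG_code. x \<noteq> y \<longrightarrow> int (hamming_dist code_len x y) \<ge> int npoints - 2 * r - int genus - 2"
proof (intro ballI impI)
  fix x y assume x: "x \<in> AG_code" and y: "y \<in> AG_code" and ne: "x \<noteq> y"
  obtain f where f: "f \<in> supported_in (L_basis deg_C)" "x = eval_vec (eval_coeffs (L_basis deg_C) f)" using x unfolding AG_code_def by blast
  obtain f' where f': "f' \<in> supported_in (L_basis deg_C)" "y = eval_vec (eval_coeffs (L_basis deg_C) f')" using y unfolding AG_code_def by blast
  have "f \<noteq> f'" using ne f f' by auto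
  then have "code_len - deg_C \<le> hamming_dist code_len x y" using hamming_dist_eval_ge[OF f(1) f'(1)] f f' by simp
  moreover have "int (code_len - deg_C) = int npoints - 2 * r - int genus - 2" using deg_C_less int_deg_C npoints_ge_15 by (simp add: code_len_def)
  ultimately show "int (hamming_dist code_len x y) \<ge> int npoints - 2 * r - int genus - 2" by linarith
qed

lemma origin_in_L_basis: "(0, 0) \<in> L_basis D" using alpha_ge_2 by (simp add: L_basis_def pole_order_def)

lemma dual_coeffs_eq: "dual_coeffs = supported_in (L_basis deg_D - {(0,0)})"
  by (auto simp: dual_coeffs_def supported_in_def)

lemma curve_points_insert_origin: "curve_points = insert (0, 0) eval_points" using origin_curve_point by (auto simp: eval_points_def)

lemma dual_AG_code_subset: "dual_AG_code \<subseteq> dual_code code_len AG_code"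
proof
  fix v assume "v \<in> dual_AG_code"
  then obtain g where g: "g \<in> dual_coeffs" "v = eval_vec (\<lambda>P. weight P * eval_coeffs (L_basis deg_D) g P)" unfolding dual_AG_code_def by blast
  have gR: "g \<in> supported_in (L_basis deg_D)" and g00: "g (0, 0) = 0" using g(1) by (auto simp: dual_coeffs_def)
  have "\<forall>c\<in>AG_code. (\<Sum>i<code_len. v i * c i) = 0"
  proof
    fix c assume "c \<in> AG_code"
    then obtain f where f: "f \<in> supported_in (L_basis deg_C)" "c = eval_vec (eval_coeffs (L_basis deg_C) f)" unfolding AG_code_def by blast
    let ?F = "\<lambda>P. weight P * (eval_coeffs (L_basis deg_C) f P * eval_coeffs (L_basis deg_D) g P)"
    have "(\<Sum>i<code_len. v i * c i) = (\<Sum>P\<in>eval_points. weight P * eval_coeffs (L_basis deg_D) g P * eval_coeffs (L_basis deg_C) f P)"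
      using g(2) f(2) by (simp add: sum_eval_vec)
    also have "\<dots> = (\<Sum>P\<in>eval_points. ?F P)" by (simp add: algebra_simps)
    also have "\<dots> = (\<Sum>P\<in>curve_points. ?F P)"
    proof -
      have "eval_coeffs (L_basis deg_D) g (0, 0) = 0" using g00 origin_in_L_basis by (simp add: eval_coeffs_origin finite_L_basis)
      moreover have "(0, 0) \<notin> eval_points" by (simp add: eval_points_def)
      ultimately show ?thesis unfolding curve_points_insert_origin by simp
    qed
    also have "\<dots> = 0" by (rule weighted_sum_eval_product[OF f(1) gR deg_C_D_less])
    finally show "(\<Sum>i<code_len. v i * c i) = 0" .
  qed
  moreover have "v \<in> vecs code_len" using g(2) eval_vec_vecs by simp
  ultimately show "v \<in> dual_code code_len AG_code" by (simp add: dual_code_def)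
qed

lemma inj_on_dual_AG_code: "inj_on (\<lambda>g. eval_vec (\<lambda>P. weight P * eval_coeffs (L_basis deg_D) g P)) dual_coeffs"
proof (rule inj_onI)
  fix g g' assume g: "g \<in> dual_coeffs" and g': "g' \<in> dual_coeffs" and e: "eval_vec (\<lambda>P. weight P * eval_coeffs (L_basis deg_D) g P) = eval_vec (\<lambda>P. weight P * eval_coeffs (L_basis deg_D) g' P)"
  show "g = g'"
  proof (rule ccontr)
    assume ne: "g \<noteq> g'"
    let ?h = "\<lambda>w. g w - g' w"
    have h: "?h \<in> supported_in (L_basis deg_D)" using g g' by (auto simp: dual_coeffs_def supported_in_def)
    have h0: "?h \<noteq> (\<lambda>w. 0)" using ne by (auto simp: fun_eq_iff)
    have "\<forall>P\<in>curve_points. eval_coeffs (L_basis deg_D) ?h P = 0"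
    proof
      fix P assume P: "P \<in> curve_points"
      show "eval_coeffs (L_basis deg_D) ?h P = 0"
      proof (cases "P = (0, 0)")
        case True
        then show ?thesis using g g' origin_in_L_basis by (simp add: eval_coeffs_origin finite_L_basis dual_coeffs_def)
      next
        case False
        then have "P \<in> eval_points" using P by (simp add: eval_points_def)
        moreover have "\<forall>P\<in>eval_points. weight P * eval_coeffs (L_basis deg_D) g P = weight P * eval_coeffs (L_basis deg_D) g' P"
          using e unfolding eval_vec_eq_iff .
        ultimately have "weight P * eval_coeffs (L_basis deg_D) g P = weight P * eval_coeffs (L_basis deg_D) g' P" by blast
        then show ?thesis using weight_nonzero by (simp add: eval_coeffs_diff)
      qed
    qed
    then have "card curve_points \<le> deg_D" by (intro card_zeros_le[OF h h0]) auto
    then show False using card_curve_points deg_D_le by simp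
  qed
qed

lemma card_dual_AG_code: "card dual_AG_code = card (UNIV::'a set) ^ (code_len - nat (2 * r + 2))"
proof -
  have "card dual_AG_code = card dual_coeffs" unfolding dual_AG_code_def by (rule card_image[OF inj_on_dual_AG_code])
  also have "\<dots> = card (UNIV::'a set) ^ card (L_basis deg_D - {(0,0)})" unfolding dual_coeffs_eq
    by (rule card_supported_in) (simp add: finite_L_basis)
  also have "card (L_basis deg_D - {(0,0)}) = code_len - nat (2 * r + 2)"
  proof -
    have "card (L_basis deg_D - {(0,0)}) = deg_D - genus" using card_L_basis_deg_D origin_in_L_basis finite_L_basis
      by (simp add: card_Diff_singleton)
    moreover have "int (deg_D - genus) = int (code_len - nat (2 * r + 2))"
      using int_deg_D deg_D_ge r1 r2 npoints_ge_15 genus_pos by (simp add: code_len_def of_nat_diff)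
    ultimately show ?thesis by simp
  qed
  finally show ?thesis .
qed

lemma dual_code_AG_code: "dual_code code_len AG_code = dual_AG_code"
proof -
  have le: "card (dual_code code_len AG_code) \<le> card (UNIV::'a set) ^ (code_len - nat (2 * r + 2))"
    by (rule card_dual_code_le[OF linear_AG_code card_AG_code])
  have fin: "finite (dual_code code_len AG_code)" by (rule finite_linear_code[OF linear_code_dual])
  show ?thesis using card_subset_eq[OF fin dual_AG_code_subset] le card_dual_AG_code card_mono[OF fin dual_AG_code_subset] by simp
qed

lemma dist_dual_AG_code: "\<forall>x\<in>dual_AG_code. \<forall>y\<in>dual_AG_code. x \<noteq> y \<longrightarrow> int (hamming_dist code_len x y) \<ge> 2 * r - int genus + 3"
proof (intro ballI impI)
  fix x y assume x: "x \<in> dual_AG_code" and y: "y \<in> dual_AG_code" and ne: "x \<noteq> y"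
  obtain g where g: "g \<in> dual_coeffs" "x = eval_vec (\<lambda>P. weight P * eval_coeffs (L_basis deg_D) g P)" using x unfolding dual_AG_code_def by blast
  obtain g' where g': "g' \<in> dual_coeffs" "y = eval_vec (\<lambda>P. weight P * eval_coeffs (L_basis deg_D) g' P)" using y unfolding dual_AG_code_def by blast
  have ne': "g \<noteq> g'" using ne g g' by auto
  let ?h = "\<lambda>w. g w - g' w"
  have h: "?h \<in> supported_in (L_basis deg_D)" using g g' by (auto simp: dual_coeffs_def supported_in_def)
  have h0: "?h \<noteq> (\<lambda>w. 0)" using ne' by (auto simp: fun_eq_iff)
  let ?Z = "{P \<in> eval_points. eval_coeffs (L_basis deg_D) ?h P = 0}"
  have sub: "insert (0, 0) ?Z \<subseteq> curve_points" using origin_curve_point by (auto simp: eval_points_def)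
  have vz: "\<forall>P\<in>insert (0, 0) ?Z. eval_coeffs (L_basis deg_D) ?h P = 0"
  proof -
    have "eval_coeffs (L_basis deg_D) ?h (0, 0) = ?h (0, 0)" by (rule eval_coeffs_origin[OF origin_in_L_basis finite_L_basis])
    also have "\<dots> = 0" using g(1) g'(1) by (simp add: dual_coeffs_def)
    finally show ?thesis by blast
  qed
  have "card (insert (0, 0) ?Z) \<le> deg_D" using card_zeros_le[OF h h0 sub] vz by blast
  moreover have "(0, 0) \<notin> ?Z" by (simp add: eval_points_def)
  ultimately have cZ: "card ?Z + 1 \<le> deg_D" by simp
  have "{P \<in> eval_points. weight P * eval_coeffs (L_basis deg_D) g P \<noteq> weight P * eval_coeffs (L_basis deg_D) g' P} = eval_points - ?Z"
  proof -
    have "weight P * eval_coeffs (L_basis deg_D) g P \<noteq> weight P * eval_coeffs (L_basis deg_D) g' P \<longleftrightarrow> eval_coeffs (L_basis deg_D) ?h P \<noteq> 0" for P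
      using weight_nonzero[of P] by (simp add: eval_coeffs_diff)
    then show ?thesis by blast
  qed
  then have "hamming_dist code_len x y = card (eval_points - ?Z)" using g(2) g'(2) by (simp add: hamming_dist_eval_vec)
  also have "\<dots> = code_len - card ?Z" using card_eval_points by (simp add: card_Diff_subset)
  finally have "hamming_dist code_len x y = code_len - card ?Z" .
  moreover have "card ?Z \<le> card eval_points" by (intro card_mono) auto
  ultimately have "int (hamming_dist code_len x y) = int code_len - int (card ?Z)" using card_eval_points by simp
  moreover have "int code_len = int npoints - 1" using npoints_ge_15 by (simp add: code_len_def)
  ultimately show "int (hamming_dist code_len x y) \<ge> 2 * r - int genus + 3" using cZ int_deg_D by linarith
qed

lemma code_params_AG_code: "code_params code_len (nat (2 * r + 2)) (int npoints - 2 * r - int genus - 2) AG_code"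
  using linear_AG_code vdim_eq_if_card[OF linear_AG_code card_AG_code] dist_AG_code by (simp add: code_params_def)

lemma code_params_dual_AG_code: "code_params code_len (nat (int npoints - 2 * r - 3)) (2 * r - int genus + 3) (dual_code code_len AG_code)"
proof -
  have lc: "linear_code code_len (dual_code code_len AG_code)" by (rule linear_code_dual)
  have "code_len - nat (2 * r + 2) = nat (int npoints - 2 * r - 3)" using r1 r2 npoints_ge_15 genus_pos by (simp add: code_len_def)
  then have "card (dual_code code_len AG_code) = card (UNIV::'a set) ^ nat (int npoints - 2 * r - 3)" using dual_code_AG_code card_dual_AG_code by simp
  then have "vdim (dual_code code_len AG_code) = nat (int npoints - 2 * r - 3)" by (rule vdim_eq_if_card[OF lc])
  then show ?thesis using lc dist_dual_AG_code dual_code_AG_code by (simp add: code_params_def)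
qed

text \<open>Rescaling coordinate i by a square root of the weight of the i-th point turns the weighted
  evaluation into the plain one, so the evaluation vector of x lies in the hull.\<close>

lemma exists_scaled_AG_code_nonzero_hull:
  obtains l where "\<And>i. l i \<noteq> 0" "vdim (code_hull code_len (coord_scale l ` AG_code)) \<noteq> 0"
proof -
  obtain \<sigma> :: 'a where \<sigma>: "\<sigma> ^ 2 = 2" using exists_sqrt_2 by blast
  have \<sigma>0: "\<sigma> \<noteq> 0" using \<sigma> two_neq_zero by auto
  define l where "l = (\<lambda>i. if i < code_len \<and> snd (point_enum i) \<noteq> 0 then \<sigma> else 1)"
  have l0: "\<And>i. l i \<noteq> 0" using \<sigma>0 by (simp add: l_def)
  have ll: "l i * l i = weight (point_enum i)" if "i < code_len" for i
    using that \<sigma> by (simp add: l_def weight_def power2_eq_square)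
  let ?C = "coord_scale l ` AG_code"
  let ?X = "single_coeff (1, 0) :: nat \<times> nat \<Rightarrow> 'a"
  define u where "u = coord_scale l (eval_vec (eval_coeffs (L_basis deg_C) ?X))"
  have uC: "u \<in> ?C" unfolding u_def AG_code_def using coeffs_of_x(1)[OF alpha_le_deg_C] by blast
  have "u = coord_scale (\<lambda>i. inverse (l i)) (eval_vec (\<lambda>P. weight P * eval_coeffs (L_basis deg_D) ?X P))"
  proof
    fix i
    show "u i = coord_scale (\<lambda>i. inverse (l i)) (eval_vec (\<lambda>P. weight P * eval_coeffs (L_basis deg_D) ?X P)) i"
    proof (cases "i < code_len")
      case True
      have "eval_coeffs (L_basis deg_C) ?X (point_enum i) = fst (point_enum i)"
        and "eval_coeffs (L_basis deg_D) ?X (point_enum i) = fst (point_enum i)"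
        using coeffs_of_x(2) alpha_le_deg_C alpha_le_deg_D by blast+
      then show ?thesis using ll[OF True] l0[of i] True
        by (simp add: u_def coord_scale_def eval_vec_def field_simps)
    qed (simp add: u_def coord_scale_def eval_vec_def)
  qed
  moreover have "?X \<in> dual_coeffs" using coeffs_of_x(1)[OF alpha_le_deg_D] by (simp add: dual_coeffs_def single_coeff_def)
  ultimately have uD: "u \<in> dual_code code_len ?C"
    unfolding dual_code_coord_scale[OF l0] dual_code_AG_code dual_AG_code_def by blast
  have "u 0 \<noteq> 0"
  proof -
    have n0: "0 < code_len" using npoints_ge_15 by (simp add: code_len_def)
    then have "point_enum 0 \<in> eval_points" using bij_point_enum by (auto simp: bij_betw_def)
    then have "fst (point_enum 0) \<noteq> 0" using curve_point_x_zero[of "point_enum 0"] by (auto simp: eval_points_def)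
    moreover have "eval_coeffs (L_basis deg_C) ?X (point_enum 0) = fst (point_enum 0)"
      using coeffs_of_x(2) alpha_le_deg_C by blast
    ultimately show ?thesis using n0 l0[of 0] by (simp add: u_def coord_scale_def eval_vec_def)
  qed
  then have "u \<noteq> (\<lambda>i. 0)" by auto
  moreover have "linear_code code_len (code_hull code_len ?C)"
    using linear_code_coord_scale[OF linear_AG_code] by (rule linear_code_hull)
  ultimately have "vdim (code_hull code_len ?C) \<noteq> 0"
    using uC uD by (intro vdim_neq_0_if_nonzero[of code_len]) (auto simp: code_hull_def)
  then show ?thesis using that l0 by blast
qed

lemma exists_code_with_hull_dim_1:
  "\<exists>C::(nat \<Rightarrow> 'a) set. code_params code_len (nat (2 * r + 2)) (int npoints - 2 * r - int genus - 2) C \<and>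
     vdim (code_hull code_len C) = 1 \<and>
     code_params code_len (nat (int npoints - 2 * r - 3)) (2 * r - int genus + 3) (dual_code code_len C)"
proof -
  obtain l where l: "\<And>i. l i \<noteq> 0" "vdim (code_hull code_len (coord_scale l ` AG_code)) \<noteq> 0"
    using exists_scaled_AG_code_nonzero_hull by blast
  obtain \<sigma> :: 'a where \<sigma>: "\<sigma> ^ 2 = 2" using exists_sqrt_2 by blast
  have "\<sigma> \<noteq> 0" using \<sigma> two_neq_zero by auto
  moreover have "\<sigma> ^ 2 \<noteq> 1" using \<sigma> by (metis add_diff_cancel_left' diff_self one_add_one zero_neq_one)
  ultimately show ?thesis
    using exists_code_hull_dim_1[OF _ _ code_params_coord_scale[OF l(1) code_params_AG_code]
        code_params_dual_coord_scale[OF l(1) code_params_dual_AG_code] l(2)]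
    by blast
qed

end

theorem mainTheorem15:
  fixes p m q0 :: nat and s g r :: int
  assumes "prime p" and "odd p" and "m \<ge> 1" and "q0 = p ^ m"
    and "card (UNIV :: 'a::{field,finite} set) = q0 ^ 2"
    and "s = int q0 * (int q0 ^ 2 + 1) div 2"
    and "g = (int q0 - 1) ^ 2 div 4"
    and "(real_of_int g - 3) / 2 < real_of_int r"
    and "real_of_int r < (real_of_int s - real_of_int g - 2) / 2"
  shows "\<exists>C :: (nat \<Rightarrow> 'a) set.
           code_params (nat (s - 1)) (nat (2 * r + 2)) (s - 2 * r - g - 2) C \<and>
           vdim (code_hull (nat (s - 1)) C) = 1 \<and>
           code_params (nat (s - 1)) (nat (s - 2 * r - 3)) (2 * r - g + 3)
             (dual_code (nat (s - 1)) C)"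
proof -
  interpret F: odd_square_field p m q0 "TYPE('a)"
    by unfold_locales (use assms in auto)
  have s: "s = int F.npoints" and g: "g = int F.genus"
    using assms(6,7) F.int_npoints F.int_genus_q0 by simp_all
  have "real_of_int g - 3 < 2 * real_of_int r" "2 * real_of_int r < real_of_int s - real_of_int g - 2"
    using assms(8,9) by simp_all
  then have "g - 3 < 2 * r" "2 * r < s - g - 2" by linarith+
  then interpret C: hull_code p m q0 "TYPE('a)" r
    by unfold_locales (simp_all add: s g)
  have "nat (s - 1) = C.code_len"
    using F.npoints_ge_15 by (simp add: s C.code_len_def nat_diff_distrib)
  then show ?thesis using C.exists_code_with_hull_dim_1 by (simp add: s g)
qed

end
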